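(* Let $d\ge1$ and $k\ge1$ be integers and suppose that $G=(V,E)$ is a $k$-fold $\mathcal{R}_d$-circuit such that every $(k-1)$-fold $\mathcal{R}_d$-circuit contained in $G$ is $\mathcal{R}_d$-rigid. Then $G$ is balanced.
   Context: For a graph $G=(V,E)$ and a generic $p:V\to\mathbb{R}^d$ (coordinates algebraically independent over $\mathbb{Q}$), the rigidity matrix $R(G,p)$ has a row for each $uv\in E$ with $p(u)-p(v)$ in the $d$ columns of $u$, $p(v)-p(u)$ in those of $v$, zeros elsewhere. The generic $d$-dimensional rigidity matroid $\mathcal{R}_d$ is its row matroid (on the edge set of a complete graph containing $G$), with rank function $r_d$ and closure $\mathrm{cl}(X)=\{x: r_d(X\cup\{x\})=r_d(X)\}$. Graphs are identified with their edge sets, and an edge set is regarded as the graph it spans. A graph $H=(W,F)$ is $\mathcal{R}_d$-rigid if it is a complete graph on at most $d+1$ vertices or $r_d(F)=d|W|-\binom{d+1}{2}$. A set of edges is cyclic if it is a union of $\mathcal{R}_d$-circuits. A graph $(V,D)$ is a $k$-fold $\mathcal{R}_d$-circuit if $D$ is cyclic and $r_d(D)=|D|-k$. Its principal partition is the partition $\{A_1,\dots,A_\ell\}$ of $D$ such that $\{D\setminus A_i\}$ is exactly the set of $(k-1)$-fold $\mathcal{R}_d$-circuits contained in $D$. It is balanced if $r_d\big(\bigcap_{i=1}^\ell \mathrm{cl}(D\setminus A_i)\big)=\ell-k$. *)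

theory Defs
  imports Main "HOL.Real"
begin

definition Kedges :: "'a set \<Rightarrow> 'a set set" where
  "Kedges V = {e. e \<subseteq> V \<and> card e = 2}"

text \<open>A polynomial is a finite set M of monomials (exponent vectors supported on I)
  with rational coefficients c.\<close>
definition alg_indep_Q :: "'i set \<Rightarrow> ('i \<Rightarrow> real) \<Rightarrow> bool" where
  "alg_indep_Q I x \<longleftrightarrow>
     (\<forall>(M :: ('i \<Rightarrow> nat) set) (c :: ('i \<Rightarrow> nat) \<Rightarrow> rat).
        finite M \<longrightarrow> (\<forall>m\<in>M. \<forall>j. j \<notin> I \<longrightarrow> m j = 0) \<longrightarrow>
        (\<Sum>m\<in>M. of_rat (c m) * (\<Prod>j\<in>I. x j ^ m j)) = 0 \<longrightarrow>
        (\<forall>m\<in>M. c m = 0))"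

text \<open>A placement p : V \<rightarrow> R^d (coordinate i < d of vertex v is p v i) is generic
  if its coordinates are algebraically independent over Q.\<close>
definition generic :: "'a set \<Rightarrow> nat \<Rightarrow> ('a \<Rightarrow> nat \<Rightarrow> real) \<Rightarrow> bool" where
  "generic V d p \<longleftrightarrow> alg_indep_Q (V \<times> {..<d}) (\<lambda>(v,i). p v i)"

definition rig_entry :: "('a \<Rightarrow> nat \<Rightarrow> real) \<Rightarrow> 'a set \<Rightarrow> 'a \<Rightarrow> nat \<Rightarrow> real" where
  "rig_entry p e w i = (if w \<in> e then p w i - p (THE u. u \<in> e \<and> u \<noteq> w) i else 0)"

definition rows_indep :: "nat \<Rightarrow> ('a \<Rightarrow> nat \<Rightarrow> real) \<Rightarrow> 'a set set \<Rightarrow> bool" where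
  "rows_indep d p F \<longleftrightarrow>
     (\<forall>c :: 'a set \<Rightarrow> real.
        (\<forall>w i. i < d \<longrightarrow> (\<Sum>e\<in>F. c e * rig_entry p e w i) = 0) \<longrightarrow> (\<forall>e\<in>F. c e = 0))"

definition row_rank :: "nat \<Rightarrow> ('a \<Rightarrow> nat \<Rightarrow> real) \<Rightarrow> 'a set set \<Rightarrow> nat" where
  "row_rank d p F = Max {card I | I. I \<subseteq> F \<and> rows_indep d p I}"

text \<open>Rank function r_d of the generic d-dimensional rigidity matroid on the
  edge set of the complete graph on V (computed at a generic placement).\<close>
definition rd :: "'a set \<Rightarrow> nat \<Rightarrow> 'a set set \<Rightarrow> nat" where
  "rd V d F = row_rank d (SOME p. generic V d p) F"

definition rcl :: "'a set \<Rightarrow> nat \<Rightarrow> 'a set set \<Rightarrow> 'a set set" where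
  "rcl V d X = {x \<in> Kedges V. rd V d (X \<union> {x}) = rd V d X}"

definition rcircuit :: "'a set \<Rightarrow> nat \<Rightarrow> 'a set set \<Rightarrow> bool" where
  "rcircuit V d C \<longleftrightarrow> C \<subseteq> Kedges V \<and> rd V d C < card C \<and>
     (\<forall>C'. C' \<subset> C \<longrightarrow> rd V d C' = card C')"

definition rcyclic :: "'a set \<Rightarrow> nat \<Rightarrow> 'a set set \<Rightarrow> bool" where
  "rcyclic V d D \<longleftrightarrow> D \<subseteq> Kedges V \<and> D = \<Union>{C. C \<subseteq> D \<and> rcircuit V d C}"

definition kfold_circuit :: "'a set \<Rightarrow> nat \<Rightarrow> int \<Rightarrow> 'a set set \<Rightarrow> bool" where
  "kfold_circuit V d k D \<longleftrightarrow> rcyclic V d D \<and> int (rd V d D) = int (card D) - k"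

definition span_verts :: "'a set set \<Rightarrow> 'a set" where
  "span_verts F = \<Union>F"

definition rrigid :: "'a set \<Rightarrow> nat \<Rightarrow> 'a set set \<Rightarrow> bool" where
  "rrigid V d F \<longleftrightarrow>
     (F = Kedges (span_verts F) \<and> card (span_verts F) \<le> d + 1) \<or>
     int (rd V d F) = int d * int (card (span_verts F)) - int ((d + 1) choose 2)"

definition principal_partition :: "'a set \<Rightarrow> nat \<Rightarrow> int \<Rightarrow> 'a set set \<Rightarrow> 'a set set set \<Rightarrow> bool" where
  "principal_partition V d k D P \<longleftrightarrow>
     (\<forall>A\<in>P. A \<noteq> {}) \<and> \<Union>P = D \<and> (\<forall>A\<in>P. \<forall>B\<in>P. A \<noteq> B \<longrightarrow> A \<inter> B = {}) \<and>
     (\<lambda>A. D - A) ` P = {D'. D' \<subseteq> D \<and> kfold_circuit V d (k - 1) D'}"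

definition balanced :: "'a set \<Rightarrow> nat \<Rightarrow> int \<Rightarrow> 'a set set \<Rightarrow> bool" where
  "balanced V d k D \<longleftrightarrow>
     (\<exists>P. principal_partition V d k D P \<and>
          int (rd V d (\<Inter>A\<in>P. rcl V d (D - A))) = int (card P) - k)"

end

(*
  For every part A of the principal partition, E - A is a rigid (k-1)-fold circuit, so its
  closure is the complete graph K(W_A) on its vertex set, and r(E - A) = r(E) - |A| + 1.
  In the generic rigidity matroid the rank of K(X) depends only on |X|, and complete graphs form
  modular pairs: r(K(X)) + r(K(Y)) = r(K(X) union K(Y)) + r(K(X inter Y)). The lower bound on
  r(K(X) union K(Y)) comes from building it by adding vertices of degree at most d, which keeps
  the rows of the rigidity matrix independent at a generic placement. Intersecting the closures
  one part at a time, the two complete graphs involved always span E, so every step lowers the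
  rank by |A| - 1, and the intersection of all cl(E - A) has rank r(E) - sum (|A| - 1) = l - k.

  Genericity is used only through determinants of coordinate differences of at most d + 1
  points: such a determinant is a rational polynomial in the coordinates that does not vanish
  identically. Generic placements exist because the reals are uncountable, whereas the
  polynomials over the ring generated by finitely many reals are countable.
*)
theory Submission
  imports Defs "Jordan_Normal_Form.Determinant" "HOL-Library.Function_Algebras"
    "HOL-Library.Countable" "HOL-Computational_Algebra.Polynomial"
    "HOL-Analysis.Continuum_Not_Denumerable"
begin

section \<open>Generic placements\<close>

definition rat_poly_fun :: "'i set \<Rightarrow> (('i \<Rightarrow> real) \<Rightarrow> real) \<Rightarrow> bool" where
  "rat_poly_fun I f \<longleftrightarrow> (\<exists>M c. finite M \<and> (\<forall>m\<in>M. \<forall>j. j \<notin> I \<longrightarrow> m j = 0) \<and>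
     (\<forall>y. f y = (\<Sum>m\<in>M. of_rat (c m) * (\<Prod>j\<in>I. y j ^ m j))))"

lemma alg_indep_Q_rat_poly_fun_nonzero:
  assumes "alg_indep_Q I x" "rat_poly_fun I f" "f y \<noteq> 0"
  shows "f x \<noteq> 0"
proof
  assume fx: "f x = 0"
  obtain M c where M: "finite M" "\<forall>m\<in>M. \<forall>j. j \<notin> I \<longrightarrow> m j = 0"
    "\<forall>y. f y = (\<Sum>m\<in>M. of_rat (c m) * (\<Prod>j\<in>I. y j ^ m j))"
    using assms(2) unfolding rat_poly_fun_def by blast
  have "\<forall>m\<in>M. c m = 0" using assms(1) M fx unfolding alg_indep_Q_def by metis
  then show False using M(3) assms(3) by simp
qed

lemma rat_poly_fun_const: "rat_poly_fun I (\<lambda>y. of_rat q)"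
  unfolding rat_poly_fun_def
  by (rule exI[of _ "{\<lambda>_. 0}"], rule exI[of _ "\<lambda>_. q"]) auto

lemma rat_poly_fun_var:
  assumes "finite I" "j \<in> I"
  shows "rat_poly_fun I (\<lambda>y. y j)"
  unfolding rat_poly_fun_def
proof (rule exI[of _ "{\<lambda>i. if i = j then 1 else 0}"], rule exI[of _ "\<lambda>_. 1"],
    intro conjI allI ballI impI)
  fix y :: "_ \<Rightarrow> real"
  have "(\<Prod>i\<in>I. y i ^ (if i = j then 1 else 0)) = (\<Prod>i\<in>I. if i = j then y i else 1)"
    by (rule prod.cong) auto
  also have "\<dots> = y j" using assms by (simp add: prod.delta)
  finally show "y j = (\<Sum>m\<in>{\<lambda>i. if i = j then 1 else 0}. of_rat 1 * (\<Prod>i\<in>I. y i ^ m i))"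
    by simp
qed (use assms in auto)

lemma rat_poly_fun_add:
  assumes "rat_poly_fun I f" "rat_poly_fun I g"
  shows "rat_poly_fun I (\<lambda>y. f y + g y)"
proof -
  obtain M1 c1 where M1: "finite M1" "\<forall>m\<in>M1. \<forall>j. j \<notin> I \<longrightarrow> m j = 0"
    "\<forall>y. f y = (\<Sum>m\<in>M1. of_rat (c1 m) * (\<Prod>j\<in>I. y j ^ m j))"
    using assms(1) unfolding rat_poly_fun_def by blast
  obtain M2 c2 where M2: "finite M2" "\<forall>m\<in>M2. \<forall>j. j \<notin> I \<longrightarrow> m j = 0"
    "\<forall>y. g y = (\<Sum>m\<in>M2. of_rat (c2 m) * (\<Prod>j\<in>I. y j ^ m j))"
    using assms(2) unfolding rat_poly_fun_def by blast
  define c where "c m = (if m \<in> M1 then c1 m else 0) + (if m \<in> M2 then c2 m else 0)" for m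
  show ?thesis unfolding rat_poly_fun_def
  proof (rule exI[of _ "M1 \<union> M2"], rule exI[of _ c], intro conjI allI)
    fix y :: "_ \<Rightarrow> real"
    let ?mo = "\<lambda>m. (\<Prod>j\<in>I. y j ^ m j)"
    have "(\<Sum>m\<in>M1 \<union> M2. (if m \<in> M1 then of_rat (c1 m) * ?mo m else 0))
        = (\<Sum>m\<in>M1. of_rat (c1 m) * ?mo m)"
      by (rule sum.mono_neutral_cong_right) (use M1 M2 in auto)
    moreover have "(\<Sum>m\<in>M1 \<union> M2. (if m \<in> M2 then of_rat (c2 m) * ?mo m else 0))
        = (\<Sum>m\<in>M2. of_rat (c2 m) * ?mo m)"
      by (rule sum.mono_neutral_cong_right) (use M1 M2 in auto)
    moreover have "(\<Sum>m\<in>M1 \<union> M2. of_rat (c m) * ?mo m) =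
       (\<Sum>m\<in>M1 \<union> M2. (if m \<in> M1 then of_rat (c1 m) * ?mo m else 0)
                    + (if m \<in> M2 then of_rat (c2 m) * ?mo m else 0))"
      by (rule sum.cong) (auto simp: c_def of_rat_add distrib_right)
    ultimately show "f y + g y = (\<Sum>m\<in>M1 \<union> M2. of_rat (c m) * ?mo m)"
      by (simp add: sum.distrib M1 M2)
  qed (use M1 M2 in auto)
qed

lemma rat_poly_fun_mult:
  assumes "rat_poly_fun I f" "rat_poly_fun I g"
  shows "rat_poly_fun I (\<lambda>y. f y * g y)"
proof -
  obtain M1 c1 where M1: "finite M1" "\<forall>m\<in>M1. \<forall>j. j \<notin> I \<longrightarrow> m j = 0"
    "\<forall>y. f y = (\<Sum>m\<in>M1. of_rat (c1 m) * (\<Prod>j\<in>I. y j ^ m j))"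
    using assms(1) unfolding rat_poly_fun_def by blast
  obtain M2 c2 where M2: "finite M2" "\<forall>m\<in>M2. \<forall>j. j \<notin> I \<longrightarrow> m j = 0"
    "\<forall>y. g y = (\<Sum>m\<in>M2. of_rat (c2 m) * (\<Prod>j\<in>I. y j ^ m j))"
    using assms(2) unfolding rat_poly_fun_def by blast
  define h where "h = (\<lambda>(a::'a \<Rightarrow> nat, b). (\<lambda>j. a j + b j))"
  define c where "c m = (\<Sum>q\<in>{q \<in> M1 \<times> M2. h q = m}. c1 (fst q) * c2 (snd q))" for m
  show ?thesis unfolding rat_poly_fun_def
  proof (rule exI[of _ "h ` (M1 \<times> M2)"], rule exI[of _ c], intro conjI allI)
    fix y :: "_ \<Rightarrow> real"
    let ?mo = "\<lambda>m. (\<Prod>j\<in>I. y j ^ m j)"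
    have mo: "?mo (h q) = ?mo (fst q) * ?mo (snd q)" for q
      by (cases q) (simp add: h_def power_add prod.distrib)
    have "f y * g y = (\<Sum>a\<in>M1. \<Sum>b\<in>M2. (of_rat (c1 a) * ?mo a) * (of_rat (c2 b) * ?mo b))"
      by (simp add: M1 M2 sum_product)
    also have "\<dots> = (\<Sum>q\<in>M1 \<times> M2. of_rat (c1 (fst q) * c2 (snd q)) * ?mo (h q))"
      by (simp add: sum.cartesian_product mo of_rat_mult mult_ac split_def)
    also have "\<dots> = (\<Sum>m\<in>h ` (M1 \<times> M2). \<Sum>q\<in>{q \<in> M1 \<times> M2. h q = m}.
                       of_rat (c1 (fst q) * c2 (snd q)) * ?mo (h q))"
      by (rule sum.image_gen) (use M1 M2 in auto)
    also have "\<dots> = (\<Sum>m\<in>h ` (M1 \<times> M2). of_rat (c m) * ?mo m)"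
    proof (rule sum.cong[OF refl])
      fix m assume "m \<in> h ` (M1 \<times> M2)"
      have "(\<Sum>q\<in>{q \<in> M1 \<times> M2. h q = m}. of_rat (c1 (fst q) * c2 (snd q)) * ?mo (h q))
          = (\<Sum>q\<in>{q \<in> M1 \<times> M2. h q = m}. of_rat (c1 (fst q) * c2 (snd q)) * ?mo m)"
        by (rule sum.cong) auto
      then show "(\<Sum>q\<in>{q \<in> M1 \<times> M2. h q = m}. of_rat (c1 (fst q) * c2 (snd q)) * ?mo (h q))
          = of_rat (c m) * ?mo m"
        by (simp add: c_def of_rat_sum sum_distrib_right)
    qed
    finally show "f y * g y = (\<Sum>m\<in>h ` (M1 \<times> M2). of_rat (c m) * ?mo m)" .
  qed (use M1 M2 in \<open>auto simp: h_def\<close>)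
qed

lemma rat_poly_fun_sum:
  "finite S \<Longrightarrow> (\<And>s. s \<in> S \<Longrightarrow> rat_poly_fun I (F s)) \<Longrightarrow> rat_poly_fun I (\<lambda>y. \<Sum>s\<in>S. F s y)"
  by (induction S rule: finite_induct)
    (use rat_poly_fun_const[of I 0] in \<open>simp_all add: rat_poly_fun_add\<close>)

lemma rat_poly_fun_prod:
  "finite S \<Longrightarrow> (\<And>s. s \<in> S \<Longrightarrow> rat_poly_fun I (F s)) \<Longrightarrow> rat_poly_fun I (\<lambda>y. \<Prod>s\<in>S. F s y)"
  by (induction S rule: finite_induct)
    (use rat_poly_fun_const[of I 1] in \<open>simp_all add: rat_poly_fun_mult\<close>)

lemma rat_poly_fun_diff:
  assumes "rat_poly_fun I f" "rat_poly_fun I g"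
  shows "rat_poly_fun I (\<lambda>y. f y - g y)"
proof -
  have "rat_poly_fun I (\<lambda>y. f y + (of_rat (-1) * g y))"
    by (intro rat_poly_fun_add rat_poly_fun_mult rat_poly_fun_const assms)
  then show ?thesis by simp
qed

inductive_set rat_subring :: "real set \<Rightarrow> real set" for X where
  rat_subring_base: "x \<in> X \<Longrightarrow> x \<in> rat_subring X"
| rat_subring_rat: "of_rat q \<in> rat_subring X"
| rat_subring_add: "x \<in> rat_subring X \<Longrightarrow> y \<in> rat_subring X \<Longrightarrow> x + y \<in> rat_subring X"
| rat_subring_mult: "x \<in> rat_subring X \<Longrightarrow> y \<in> rat_subring X \<Longrightarrow> x * y \<in> rat_subring X"

datatype ring_expr = Leaf nat | Rat rat | Add ring_expr ring_expr | Mult ring_expr ring_expr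

instance ring_expr :: countable by countable_datatype

fun eval_ring_expr :: "real set \<Rightarrow> ring_expr \<Rightarrow> real" where
  "eval_ring_expr X (Leaf n) = from_nat_into X n"
| "eval_ring_expr X (Rat q) = of_rat q"
| "eval_ring_expr X (Add a b) = eval_ring_expr X a + eval_ring_expr X b"
| "eval_ring_expr X (Mult a b) = eval_ring_expr X a * eval_ring_expr X b"

lemma countable_rat_subring:
  assumes "countable X"
  shows "countable (rat_subring X)"
proof -
  have "rat_subring X \<subseteq> range (eval_ring_expr X)"
  proof
    fix x assume "x \<in> rat_subring X"
    then show "x \<in> range (eval_ring_expr X)"
    proof induction
      case (rat_subring_base x)
      then obtain n where "from_nat_into X n = x" using from_nat_into_surj[OF assms] by auto
      then show ?case by (intro range_eqI[of _ _ "Leaf n"]) simp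
    next
      case (rat_subring_rat q)
      show ?case by (intro range_eqI[of _ _ "Rat q"]) simp
    next
      case (rat_subring_add x y)
      then obtain a b where "x = eval_ring_expr X a" "y = eval_ring_expr X b" by blast
      then show ?case by (intro range_eqI[of _ _ "Add a b"]) simp
    next
      case (rat_subring_mult x y)
      then obtain a b where "x = eval_ring_expr X a" "y = eval_ring_expr X b" by blast
      then show ?case by (intro range_eqI[of _ _ "Mult a b"]) simp
    qed
  qed
  then show ?thesis by (rule countable_subset) simp
qed

lemma rat_subring_sum:
  "finite S \<Longrightarrow> (\<And>s. s \<in> S \<Longrightarrow> f s \<in> rat_subring X) \<Longrightarrow> (\<Sum>s\<in>S. f s) \<in> rat_subring X"
  by (induction S rule: finite_induct) (use rat_subring_rat[of 0 X] rat_subring_add in auto)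

lemma rat_subring_prod:
  "finite S \<Longrightarrow> (\<And>s. s \<in> S \<Longrightarrow> f s \<in> rat_subring X) \<Longrightarrow> (\<Prod>s\<in>S. f s) \<in> rat_subring X"
  by (induction S rule: finite_induct) (use rat_subring_rat[of 1 X] rat_subring_mult in auto)

lemma rat_subring_power: "x \<in> rat_subring X \<Longrightarrow> x ^ n \<in> rat_subring X"
  by (induction n) (use rat_subring_rat[of 1 X] rat_subring_mult in auto)

lemma exists_non_root_of_polys_over_countable:
  fixes R :: "real set"
  assumes "countable R"
  shows "\<exists>t. \<forall>P. P \<noteq> 0 \<and> (\<forall>i. coeff P i \<in> R) \<longrightarrow> poly P t \<noteq> 0"
proof -
  define PR where "PR = {P :: real poly. P \<noteq> 0 \<and> (\<forall>i. coeff P i \<in> R)}"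
  have "PR \<subseteq> Poly ` lists R"
  proof
    fix P assume "P \<in> PR"
    then have "coeffs P \<in> lists R" unfolding PR_def by (auto simp: coeffs_def)
    then show "P \<in> Poly ` lists R" by (metis Poly_coeffs imageI)
  qed
  then have "countable PR" using assms by (metis countable_image countable_lists countable_subset)
  then have "countable (\<Union>P\<in>PR. {t. poly P t = 0})"
    by (rule countable_UN) (auto simp: PR_def intro: countable_finite poly_roots_finite)
  then have "(\<Union>P\<in>PR. {t. poly P t = 0}) \<noteq> UNIV" using uncountable_UNIV_real by auto
  then obtain t where "t \<notin> (\<Union>P\<in>PR. {t. poly P t = 0})" by auto
  then show ?thesis unfolding PR_def by blast
qed

lemma alg_indep_Q_degree_slice_nonzero:
  assumes ind: "alg_indep_Q I x" and a: "a \<notin> I" and M: "finite M"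
    and supp: "\<forall>m\<in>M. \<forall>j. j \<notin> insert a I \<longrightarrow> m j = 0" and m0: "m0 \<in> M" "c m0 \<noteq> 0"
  shows "(\<Sum>m\<in>{m\<in>M. m a = m0 a}. of_rat (c m) * (\<Prod>j\<in>I. x j ^ m j)) \<noteq> 0"
proof
  let ?mo = "\<lambda>m. (\<Prod>j\<in>I. x j ^ m j)"
  define Mk where "Mk = {m\<in>M. m a = m0 a}"
  define h where "h m = m(a := 0)" for m :: "'a \<Rightarrow> nat"
  define c' where "c' n = c (n(a := m0 a))" for n
  assume "(\<Sum>m\<in>{m\<in>M. m a = m0 a}. of_rat (c m) * ?mo m) = 0"
  then have "(\<Sum>m\<in>Mk. of_rat (c m) * ?mo m) = 0" unfolding Mk_def .
  have injh: "inj_on h Mk"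
  proof
    fix m1 m2 assume "m1 \<in> Mk" "m2 \<in> Mk" "h m1 = h m2"
    show "m1 = m2"
    proof
      fix j
      show "m1 j = m2 j"
        using \<open>m1 \<in> Mk\<close> \<open>m2 \<in> Mk\<close> fun_cong[OF \<open>h m1 = h m2\<close>, of j]
        by (cases "j = a") (auto simp: Mk_def h_def)
    qed
  qed
  have "(\<Sum>n\<in>h ` Mk. of_rat (c' n) * ?mo n) = (\<Sum>m\<in>Mk. of_rat (c' (h m)) * ?mo (h m))"
    by (simp add: sum.reindex[OF injh])
  also have "\<dots> = (\<Sum>m\<in>Mk. of_rat (c m) * ?mo m)"
  proof (rule sum.cong[OF refl])
    fix m assume "m \<in> Mk"
    then have "(h m) (a := m0 a) = m" unfolding h_def Mk_def by auto
    moreover have "?mo (h m) = ?mo m" by (rule prod.cong) (use a in \<open>auto simp: h_def\<close>)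
    ultimately show "of_rat (c' (h m)) * ?mo (h m) = of_rat (c m) * ?mo m" by (simp add: c'_def)
  qed
  finally have "(\<Sum>n\<in>h ` Mk. of_rat (c' n) * ?mo n) = 0"
    using \<open>(\<Sum>m\<in>Mk. of_rat (c m) * ?mo m) = 0\<close> by simp
  moreover have "finite (h ` Mk)" using M Mk_def by simp
  moreover have "\<forall>n\<in>h ` Mk. \<forall>j. j \<notin> I \<longrightarrow> n j = 0" using supp unfolding Mk_def h_def by auto
  ultimately have "\<forall>n\<in>h ` Mk. c' n = 0" using ind unfolding alg_indep_Q_def by blast
  moreover have "m0 \<in> Mk" using m0 by (simp add: Mk_def)
  moreover have "c' (h m0) = c m0" by (simp add: c'_def h_def)
  ultimately show False using m0(2) by auto
qed

lemma alg_indep_Q_insert: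
  assumes fin: "finite I" and ind: "alg_indep_Q I x" and a: "a \<notin> I"
  obtains t where "alg_indep_Q (insert a I) (x(a := t))"
proof -
  let ?R = "rat_subring (x ` I)"
  let ?mo = "\<lambda>m. (\<Prod>j\<in>I. x j ^ m j)"
  have "countable ?R" by (intro countable_rat_subring countable_finite finite_imageI fin)
  then obtain t where t: "\<forall>P. P \<noteq> 0 \<and> (\<forall>i. coeff P i \<in> ?R) \<longrightarrow> poly P t \<noteq> 0"
    using exists_non_root_of_polys_over_countable by blast
  have "alg_indep_Q (insert a I) (x(a := t))"
    unfolding alg_indep_Q_def
  proof (intro allI impI ballI, rule ccontr)
    fix M :: "('a \<Rightarrow> nat) set" and c m0
    assume M: "finite M" and supp: "\<forall>m\<in>M. \<forall>j. j \<notin> insert a I \<longrightarrow> m j = 0"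
      and z: "(\<Sum>m\<in>M. of_rat (c m) * (\<Prod>j\<in>insert a I. (x(a := t)) j ^ m j)) = 0"
      and m0: "m0 \<in> M" "c m0 \<noteq> 0"
    define P where "P = (\<Sum>m\<in>M. monom (of_rat (c m) * ?mo m) (m a))"
    have "poly P t = (\<Sum>m\<in>M. of_rat (c m) * ?mo m * t ^ (m a))"
      by (simp add: P_def poly_sum poly_monom)
    also have "\<dots> = (\<Sum>m\<in>M. of_rat (c m) * (\<Prod>j\<in>insert a I. (x(a := t)) j ^ m j))"
    proof (rule sum.cong[OF refl])
      fix m
      have "(\<Prod>j\<in>I. (x(a := t)) j ^ m j) = ?mo m" by (rule prod.cong) (use a in auto)
      then show "of_rat (c m) * ?mo m * t ^ (m a)
          = of_rat (c m) * (\<Prod>j\<in>insert a I. (x(a := t)) j ^ m j)"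
        using fin a by (simp add: prod.insert mult_ac)
    qed
    finally
    have "poly P t = 0" using z by simp
    have coeff_P: "coeff P i = (\<Sum>m\<in>{m\<in>M. m a = i}. of_rat (c m) * ?mo m)" for i
    proof -
      have "coeff P i = (\<Sum>m\<in>M. if m a = i then of_rat (c m) * ?mo m else 0)"
        by (simp add: P_def coeff_sum coeff_monom eq_commute)
      then show ?thesis by (simp add: sum.inter_filter[symmetric] M)
    qed
    have "coeff P i \<in> ?R" for i
      unfolding coeff_P
    proof (rule rat_subring_sum)
      fix m
      have "?mo m \<in> ?R"
        by (rule rat_subring_prod[OF fin]) (rule rat_subring_power, rule rat_subring_base, simp)
      then show "of_rat (c m) * ?mo m \<in> ?R" by (rule rat_subring_mult[OF rat_subring_rat])
    qed (use M in simp)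
    moreover have "coeff P (m0 a) \<noteq> 0"
      unfolding coeff_P by (rule alg_indep_Q_degree_slice_nonzero[where c = c, OF ind a M supp m0])
    then have "P \<noteq> 0" by auto
    ultimately show False using t \<open>poly P t = 0\<close> by blast
  qed
  then show thesis by (rule that)
qed

lemma alg_indep_Q_exists: "finite I \<Longrightarrow> \<exists>x. alg_indep_Q I x"
proof (induction I rule: finite_induct)
  case empty
  have "alg_indep_Q {} x" for x
    unfolding alg_indep_Q_def
  proof (intro allI impI ballI)
    fix M c m
    assume "finite M" "\<forall>m\<in>M. \<forall>j. j \<notin> {} \<longrightarrow> m j = 0"
      "(\<Sum>m\<in>M. real_of_rat (c m) * (\<Prod>j\<in>{}. x j ^ m j)) = 0" "m \<in> M"
    then have "\<And>m'. m' \<in> M \<Longrightarrow> m' = (\<lambda>_. 0)" by (auto intro!: ext)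
    then have "M = {\<lambda>_. 0}" using \<open>m \<in> M\<close> by blast
    then show "c m = 0" using \<open>m \<in> M\<close> \<open>(\<Sum>m\<in>M. _) = 0\<close> by simp
  qed
  then show ?case by blast
next
  case (insert a I)
  then obtain x where x: "alg_indep_Q I x" by blast
  obtain t where "alg_indep_Q (insert a I) (x(a := t))"
    by (rule alg_indep_Q_insert[OF insert(1) x insert(2)])
  then show ?case by blast
qed

lemma generic_exists:
  assumes "finite V"
  shows "\<exists>p. generic V d p"
proof -
  have "finite (V \<times> {..<d})" using assms by simp
  then obtain x where "alg_indep_Q (V \<times> {..<d}) x" using alg_indep_Q_exists by blast
  moreover have "(\<lambda>(v, i). x (v, i)) = x" by (simp add: case_prod_eta)
  ultimately have "generic V d (\<lambda>v i. x (v, i))" unfolding generic_def by simp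
  then show ?thesis by blast
qed

definition generic_placement :: "'a set \<Rightarrow> nat \<Rightarrow> 'a \<Rightarrow> nat \<Rightarrow> real" where
  "generic_placement V d = (SOME p. generic V d p)"

lemma generic_generic_placement:
  assumes "finite V"
  shows "generic V d (generic_placement V d)"
  unfolding generic_placement_def using generic_exists[OF assms] by (rule someI_ex)

lemma rd_eq_row_rank: "rd V d F = row_rank d (generic_placement V d) F"
  unfolding rd_def generic_placement_def ..

section \<open>Affine independence of generic points\<close>

lemma det_nonzero_kernel:
  fixes A :: "real mat"
  assumes A: "A \<in> carrier_mat n n" and d: "det A \<noteq> 0"
    and v: "\<forall>j<n. (\<Sum>i<n. A $$ (j, i) * v i) = 0" and i: "i < n"
  shows "v i = 0"
proof -
  define w where "w = vec n v"
  have w: "w \<in> carrier_vec n" unfolding w_def by simp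
  have "A *\<^sub>v w = 0\<^sub>v n"
  proof (rule eq_vecI)
    fix j assume "j < dim_vec (0\<^sub>v n :: real vec)"
    then have j: "j < n" by simp
    have "(A *\<^sub>v w) $ j = (\<Sum>i\<in>{0..<n}. A $$ (j, i) * v i)"
      using A j by (simp add: mult_mat_vec_def scalar_prod_def w_def)
    also have "\<dots> = 0" using v j by (simp add: atLeast0LessThan)
    finally show "(A *\<^sub>v w) $ j = 0\<^sub>v n $ j" using j by simp
  qed (use A in simp)
  then have "w = 0\<^sub>v n" using det_0_iff_vec_prod_zero[OF A] d w by blast
  then show ?thesis using i unfolding w_def by (metis index_vec index_zero_vec(1))
qed

lemma rat_poly_fun_det_differences:
  assumes V: "finite V" and us: "set us \<subseteq> V" "length us = Suc m" and md: "m \<le> d"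
  shows "rat_poly_fun (V \<times> {..<d}) (\<lambda>y. det (mat m m (\<lambda>(j, i). y (us ! Suc i, j) - y (us ! 0, j))))"
proof -
  let ?P = "{\<sigma>. \<sigma> permutes {0..<m}}"
  have leibniz: "det (mat m m (\<lambda>(j, i). y (us ! Suc i, j) - y (us ! 0, j))) =
      (\<Sum>\<sigma>\<in>?P. of_rat (of_int (sign \<sigma>)) * (\<Prod>i\<in>{0..<m}. y (us ! Suc (\<sigma> i), i) - y (us ! 0, i)))"
    for y :: "'a \<times> nat \<Rightarrow> real"
    unfolding det_def by (auto intro!: sum.cong prod.cong simp: permutes_in_image)
  have "rat_poly_fun (V \<times> {..<d}) (\<lambda>y. \<Sum>\<sigma>\<in>?P. of_rat (of_int (sign \<sigma>)) *
      (\<Prod>i\<in>{0..<m}. y (us ! Suc (\<sigma> i), i) - y (us ! 0, i)))"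
  proof (rule rat_poly_fun_sum)
    fix \<sigma> assume \<sigma>: "\<sigma> \<in> ?P"
    show "rat_poly_fun (V \<times> {..<d}) (\<lambda>y. of_rat (of_int (sign \<sigma>)) *
        (\<Prod>i\<in>{0..<m}. y (us ! Suc (\<sigma> i), i) - y (us ! 0, i)))"
    proof (rule rat_poly_fun_mult[OF rat_poly_fun_const], rule rat_poly_fun_prod)
      fix i assume i: "i \<in> {0..<m}"
      then have "\<sigma> i < m" using \<sigma> by (auto simp: permutes_in_image)
      then have "(us ! Suc (\<sigma> i), i) \<in> V \<times> {..<d}" "(us ! 0, i) \<in> V \<times> {..<d}"
        using us md i by auto
      then show "rat_poly_fun (V \<times> {..<d}) (\<lambda>y. y (us ! Suc (\<sigma> i), i) - y (us ! 0, i))"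
        using V by (intro rat_poly_fun_diff rat_poly_fun_var) auto
    qed simp
  qed (simp add: finite_permutations)
  then show ?thesis by (simp only: leibniz)
qed

text \<open>The determinant is a rational polynomial in the coordinates; it takes the value 1 at the
  placement sending the (i+1)-st point to the i-th unit vector and all other points to 0.\<close>
lemma det_generic_differences_nonzero:
  assumes p: "generic V d p" and V: "finite V"
    and us: "distinct us" "set us \<subseteq> V" "length us = Suc m" and md: "m \<le> d"
  shows "det (mat m m (\<lambda>(j, i). p (us ! Suc i) j - p (us ! 0) j)) \<noteq> 0"
proof -
  define y0 where "y0 = (\<lambda>(w, j). if \<exists>i<m. w = us ! Suc i \<and> j = i then 1 else (0::real))"
  have "mat m m (\<lambda>(j, i). y0 (us ! Suc i, j) - y0 (us ! 0, j)) = 1\<^sub>m m"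
  proof (rule eq_matI)
    fix j i assume "j < dim_row (1\<^sub>m m :: real mat)" "i < dim_col (1\<^sub>m m :: real mat)"
    then have jm: "j < m" and im: "i < m" by auto
    have "\<forall>i'<m. (us ! Suc i = us ! Suc i') = (i = i')"
      using us im by (simp add: nth_eq_iff_index_eq)
    then have "(\<exists>i'<m. us ! Suc i = us ! Suc i' \<and> j = i') \<longleftrightarrow> j = i"
      using im by blast
    moreover have "\<forall>i'<m. us ! 0 \<noteq> us ! Suc i'"
      using us by (simp add: nth_eq_iff_index_eq)
    then have "\<not> (\<exists>i'<m. us ! 0 = us ! Suc i' \<and> j = i')" by blast
    ultimately show "mat m m (\<lambda>(j, i). y0 (us ! Suc i, j) - y0 (us ! 0, j)) $$ (j, i) = 1\<^sub>m m $$ (j, i)"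
      using jm im by (simp add: y0_def)
  qed auto
  then have "det (mat m m (\<lambda>(j, i). y0 (us ! Suc i, j) - y0 (us ! 0, j))) \<noteq> 0" by simp
  moreover have "alg_indep_Q (V \<times> {..<d}) (\<lambda>(v, i). p v i)"
    using p unfolding generic_def .
  ultimately show ?thesis
    using alg_indep_Q_rat_poly_fun_nonzero[OF _ rat_poly_fun_det_differences[OF V us(2,3) md]]
    by fastforce
qed

lemma generic_differences_indep:
  assumes p: "generic V d p" and V: "finite V"
    and us: "distinct us" "set us \<subseteq> V" "length us = Suc m" and md: "m \<le> d"
    and l: "\<forall>j<d. (\<Sum>i<m. l i * (p (us ! Suc i) j - p (us ! 0) j)) = 0" and i: "i < m"
  shows "l i = 0"
proof -
  let ?A = "mat m m (\<lambda>(j, i). p (us ! Suc i) j - p (us ! 0) j)"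
  have "\<forall>j<m. (\<Sum>i<m. ?A $$ (j, i) * l i) = 0"
  proof (intro allI impI)
    fix j assume j: "j < m"
    have "(\<Sum>i<m. ?A $$ (j, i) * l i) = (\<Sum>i<m. l i * (p (us ! Suc i) j - p (us ! 0) j))"
      using j by (intro sum.cong) auto
    then show "(\<Sum>i<m. ?A $$ (j, i) * l i) = 0" using l j md by auto
  qed
  then show ?thesis
    using det_nonzero_kernel[of ?A m] det_generic_differences_nonzero[OF p V us md] i by auto
qed

lemma generic_differences_functional_zero:
  assumes p: "generic V d p" and V: "finite V"
    and us: "distinct us" "set us \<subseteq> V" "length us = Suc d"
    and s: "\<forall>i<d. (\<Sum>j<d. s j * (p (us ! Suc i) j - p (us ! 0) j)) = 0" and j: "j < d"
  shows "s j = 0"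
proof -
  let ?A = "mat d d (\<lambda>(j, i). p (us ! Suc i) j - p (us ! 0) j)"
  have "det (transpose_mat ?A) \<noteq> 0"
    using det_generic_differences_nonzero[OF p V us le_refl] det_transpose[of ?A d] by simp
  moreover have "\<forall>i<d. (\<Sum>j<d. transpose_mat ?A $$ (i, j) * s j) = 0"
  proof (intro allI impI)
    fix i assume i: "i < d"
    have "(\<Sum>j<d. transpose_mat ?A $$ (i, j) * s j) = (\<Sum>j<d. s j * (p (us ! Suc i) j - p (us ! 0) j))"
      using i by (intro sum.cong) auto
    then show "(\<Sum>j<d. transpose_mat ?A $$ (i, j) * s j) = 0" using s i by auto
  qed
  ultimately show ?thesis using det_nonzero_kernel[of "transpose_mat ?A" d] j by auto
qed

section \<open>Rank of sets of rows of the rigidity matrix\<close>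

definition scale_fun :: "real \<Rightarrow> ('b \<Rightarrow> real) \<Rightarrow> 'b \<Rightarrow> real" where
  "scale_fun c f = (\<lambda>x. c * f x)"

global_interpretation fun_vs: vector_space "scale_fun :: real \<Rightarrow> ('b \<Rightarrow> real) \<Rightarrow> 'b \<Rightarrow> real"
  by unfold_locales (auto simp: scale_fun_def fun_eq_iff algebra_simps)

lemma sum_fun_apply: "(\<Sum>e\<in>S. f e) x = (\<Sum>e\<in>S. f e x)"
  by (induction S rule: infinite_finite_induct) auto

lemma scale_fun_apply[simp]: "scale_fun c f x = c * f x"
  by (simp add: scale_fun_def)

definition rig_row :: "nat \<Rightarrow> ('a \<Rightarrow> nat \<Rightarrow> real) \<Rightarrow> 'a set \<Rightarrow> ('a \<times> nat \<Rightarrow> real)" where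
  "rig_row d p e = (\<lambda>(w, i). if i < d then rig_entry p e w i else 0)"

lemma rig_row_sum_apply:
  "(\<Sum>e\<in>S. scale_fun (c e) (rig_row d p e)) (w, i) = (if i < d then (\<Sum>e\<in>S. c e * rig_entry p e w i) else 0)"
  by (simp add: sum_fun_apply rig_row_def)

lemma rows_indepD:
  assumes "rows_indep d p F" "\<And>w i. i < d \<Longrightarrow> (\<Sum>e\<in>F. c e * rig_entry p e w i) = 0" "e \<in> F"
  shows "c e = 0"
  using assms unfolding rows_indep_def by (elim allE[of _ c]) auto

lemma rows_indep_subset:
  assumes "rows_indep d p F" "G \<subseteq> F" "finite F"
  shows "rows_indep d p G"
  unfolding rows_indep_def
proof (intro allI impI ballI)
  fix c :: "'a set \<Rightarrow> real" and e
  assume h: "\<forall>w i. i < d \<longrightarrow> (\<Sum>e\<in>G. c e * rig_entry p e w i) = 0" and e: "e \<in> G"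
  define c' where "c' f = (if f \<in> G then c f else 0)" for f
  have "\<forall>w i. i < d \<longrightarrow> (\<Sum>e\<in>F. c' e * rig_entry p e w i) = 0"
  proof (intro allI impI)
    fix w i assume "i < d"
    have "(\<Sum>e\<in>F. c' e * rig_entry p e w i) = (\<Sum>e\<in>F. if e \<in> G then c e * rig_entry p e w i else 0)"
      by (rule sum.cong) (auto simp: c'_def)
    also have "\<dots> = (\<Sum>e\<in>F \<inter> G. c e * rig_entry p e w i)" by (rule sum.inter_restrict[OF assms(3), symmetric])
    also have "F \<inter> G = G" using assms(2) by auto
    finally have "(\<Sum>e\<in>F. c' e * rig_entry p e w i) = (\<Sum>e\<in>G. c e * rig_entry p e w i)" .
    then show "(\<Sum>e\<in>F. c' e * rig_entry p e w i) = 0" using h \<open>i < d\<close> by simp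
  qed
  then have "c' e = 0" using assms(1) e assms(2) unfolding rows_indep_def by blast
  then show "c e = 0" using e by (simp add: c'_def)
qed

lemma rows_indep_empty: "rows_indep d p {}"
  unfolding rows_indep_def by simp

lemma row_rank_cards:
  assumes "finite F"
  shows "finite {card I | I. I \<subseteq> F \<and> rows_indep d p I}" "{card I | I. I \<subseteq> F \<and> rows_indep d p I} \<noteq> {}"
proof -
  have "{card I | I. I \<subseteq> F \<and> rows_indep d p I} \<subseteq> card ` Pow F" by auto
  moreover have "finite (card ` Pow F)" using assms by simp
  ultimately show "finite {card I | I. I \<subseteq> F \<and> rows_indep d p I}" by (rule finite_subset)
  have "card {} \<in> {card I | I. I \<subseteq> F \<and> rows_indep d p I}"
    unfolding mem_Collect_eq by (rule exI[of _ "{}"]) (simp add: rows_indep_empty)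
  then show "{card I | I. I \<subseteq> F \<and> rows_indep d p I} \<noteq> {}" by auto
qed

lemma card_le_row_rank:
  assumes "finite F" "I \<subseteq> F" "rows_indep d p I"
  shows "card I \<le> row_rank d p F"
  unfolding row_rank_def
proof (rule Max_ge[OF row_rank_cards(1)[OF assms(1)]])
  show "card I \<in> {card I | I. I \<subseteq> F \<and> rows_indep d p I}"
    unfolding mem_Collect_eq by (rule exI[of _ I]) (simp add: assms)
qed

lemma row_rank_basis:
  assumes "finite F"
  obtains I where "I \<subseteq> F" "rows_indep d p I" "card I = row_rank d p F"
proof -
  have "row_rank d p F \<in> {card I | I. I \<subseteq> F \<and> rows_indep d p I}"
    unfolding row_rank_def using row_rank_cards[OF assms] by (rule Max_in)
  then obtain I where "row_rank d p F = card I" "I \<subseteq> F" "rows_indep d p I" by auto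
  then show ?thesis using that by simp
qed

lemma row_rank_le_card: "finite F \<Longrightarrow> row_rank d p F \<le> card F"
proof -
  assume F: "finite F"
  obtain I where I: "I \<subseteq> F" "rows_indep d p I" "card I = row_rank d p F" using row_rank_basis[OF F] .
  from card_mono[OF F I(1)] I(3) show ?thesis by simp
qed

lemma row_rank_mono: "finite G \<Longrightarrow> F \<subseteq> G \<Longrightarrow> row_rank d p F \<le> row_rank d p G"
proof -
  assume G: "finite G" and FG: "F \<subseteq> G"
  then have F: "finite F" by (rule finite_subset[rotated])
  obtain I where I: "I \<subseteq> F" "rows_indep d p I" "card I = row_rank d p F" using row_rank_basis[OF F] .
  have "I \<subseteq> G" using I(1) FG by simp
  then show ?thesis using card_le_row_rank[OF G _ I(2)] I(3) by simp
qed

lemma row_rank_eq_card_iff: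
  assumes "finite F"
  shows "row_rank d p F = card F \<longleftrightarrow> rows_indep d p F"
proof
  assume "row_rank d p F = card F"
  moreover obtain I where "I \<subseteq> F" "rows_indep d p I" "card I = row_rank d p F" using row_rank_basis[OF assms] .
  ultimately have "I \<subseteq> F" "card I = card F" "rows_indep d p I" by simp_all
  then have "I = F" using assms card_subset_eq by blast
  then show "rows_indep d p F" using \<open>rows_indep d p I\<close> by simp
next
  assume "rows_indep d p F"
  then show "row_rank d p F = card F" using card_le_row_rank[OF assms subset_refl, of d p] row_rank_le_card[OF assms, of d p] by simp
qed

lemma row_rank_insert_le: "finite F \<Longrightarrow> row_rank d p (insert e F) \<le> row_rank d p F + 1"
proof -
  assume F: "finite F"
  have F': "finite (insert e F)" using F by simp
  obtain I where I: "I \<subseteq> insert e F" "rows_indep d p I" "card I = row_rank d p (insert e F)"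
    using row_rank_basis[OF F'] .
  have fI: "finite I" using F' I(1) by (rule finite_subset[rotated])
  have "I - {e} \<subseteq> F" using I by auto
  moreover have "rows_indep d p (I - {e})" using rows_indep_subset[OF I(2) _ fI] by blast
  ultimately have "card (I - {e}) \<le> row_rank d p F" using card_le_row_rank[OF F] by blast
  moreover have "card I \<le> card (I - {e}) + 1"
  proof (cases "e \<in> I")
    case True
    then show ?thesis using card_Suc_Diff1[OF fI True] by simp
  next
    case False
    then show ?thesis by simp
  qed
  ultimately show ?thesis using I(3) by simp
qed

definition indep_family :: "'k set \<Rightarrow> ('k \<Rightarrow> 'b \<Rightarrow> real) \<Rightarrow> bool" where
  "indep_family K g \<longleftrightarrow> (\<forall>l. (\<Sum>k\<in>K. scale_fun (l k) (g k)) = 0 \<longrightarrow> (\<forall>k\<in>K. l k = 0))"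

lemma indep_familyD:
  "indep_family K g \<Longrightarrow> (\<Sum>k\<in>K. scale_fun (l k) (g k)) = 0 \<Longrightarrow> k \<in> K \<Longrightarrow> l k = 0"
  unfolding indep_family_def by blast

lemma indep_family_inj_on:
  assumes K: "finite K" and ind: "indep_family K g"
  shows "inj_on g K"
proof
  fix k1 k2 assume k: "k1 \<in> K" "k2 \<in> K" "g k1 = g k2"
  show "k1 = k2"
  proof (rule ccontr)
    assume ne: "k1 \<noteq> k2"
    define l where "l k = (if k = k1 then 1 else if k = k2 then -1 else (0::real))" for k
    have "(\<Sum>k\<in>K. scale_fun (l k) (g k)) x = g k1 x - g k2 x" for x
    proof -
      have "(\<Sum>k\<in>K. scale_fun (l k) (g k)) x =
          (\<Sum>k\<in>K. (if k = k1 then g k1 x else 0) + (if k = k2 then - g k2 x else 0))"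
        unfolding sum_fun_apply by (rule sum.cong) (auto simp: l_def ne)
      also have "\<dots> = g k1 x - g k2 x" using K k by (simp add: sum.distrib)
      finally show ?thesis .
    qed
    then have "(\<Sum>k\<in>K. scale_fun (l k) (g k)) = 0" using k(3) by (simp add: fun_eq_iff)
    then have "l k1 = 0" using indep_familyD[OF ind _ k(1)] by blast
    then show False by (simp add: l_def)
  qed
qed

lemma indep_family_independent:
  assumes K: "finite K" and ind: "indep_family K g"
  shows "fun_vs.independent (g ` K)"
  unfolding fun_vs.dependent_finite[OF finite_imageI[OF K]]
proof (intro notI, elim exE conjE bexE)
  fix u v assume s: "(\<Sum>v\<in>g ` K. scale_fun (u v) v) = 0" and v: "v \<in> g ` K" and uv: "u v \<noteq> 0"
  have "(\<Sum>k\<in>K. scale_fun (u (g k)) (g k)) = 0"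
    using s by (simp add: sum.reindex[OF indep_family_inj_on[OF K ind]])
  then have "\<forall>k\<in>K. u (g k) = 0" using indep_familyD[OF ind, of "\<lambda>k. u (g k)"] by blast
  then show False using v uv by auto
qed

lemma sum_rig_rows_eq_0_iff:
  "(\<Sum>e\<in>F. scale_fun (c e) (rig_row d p e)) = 0 \<longleftrightarrow>
    (\<forall>w i. i < d \<longrightarrow> (\<Sum>e\<in>F. c e * rig_entry p e w i) = 0)"
proof
  assume h: "(\<Sum>e\<in>F. scale_fun (c e) (rig_row d p e)) = 0"
  show "\<forall>w i. i < d \<longrightarrow> (\<Sum>e\<in>F. c e * rig_entry p e w i) = 0"
  proof (intro allI impI)
    fix w i assume "i < d"
    have "(\<Sum>e\<in>F. scale_fun (c e) (rig_row d p e)) (w, i) = 0" using h by simp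
    then show "(\<Sum>e\<in>F. c e * rig_entry p e w i) = 0" using \<open>i < d\<close> by (simp add: rig_row_sum_apply)
  qed
next
  assume "\<forall>w i. i < d \<longrightarrow> (\<Sum>e\<in>F. c e * rig_entry p e w i) = 0"
  then show "(\<Sum>e\<in>F. scale_fun (c e) (rig_row d p e)) = 0"
    by (auto simp: fun_eq_iff rig_row_sum_apply)
qed

lemma rows_indep_iff_indep_family: "rows_indep d p F \<longleftrightarrow> indep_family F (rig_row d p)"
  unfolding rows_indep_def indep_family_def sum_rig_rows_eq_0_iff ..

lemma rig_row_in_span_of_maximal:
  assumes J: "rows_indep d p J" "finite J" and eF: "\<not> rows_indep d p (insert e J)" "e \<notin> J"
  shows "rig_row d p e \<in> fun_vs.span (rig_row d p ` J)"
proof -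
  obtain c where c: "\<forall>w i. i < d \<longrightarrow> (\<Sum>f\<in>insert e J. c f * rig_entry p f w i) = 0"
    and nz: "\<exists>f\<in>insert e J. c f \<noteq> 0"
    using eF(1) unfolding rows_indep_def by blast
  have sp: "(\<Sum>f\<in>insert e J. c f * rig_entry p f w i) = c e * rig_entry p e w i + (\<Sum>f\<in>J. c f * rig_entry p f w i)" for w i
    using J(2) eF(2) by simp
  have ce: "c e \<noteq> 0"
  proof
    assume "c e = 0"
    then have z: "(\<Sum>f\<in>J. c f * rig_entry p f w i) = 0" if "i < d" for w i using c sp that by simp
    have "\<forall>f\<in>J. c f = 0" using rows_indepD[OF J(1) z] by blast
    then show False using nz \<open>c e = 0\<close> by auto
  qed
  have "rig_row d p e = (\<Sum>f\<in>J. scale_fun (- c f / c e) (rig_row d p f))"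
  proof (rule ext, clarify)
    fix w i
    show "rig_row d p e (w, i) = (\<Sum>f\<in>J. scale_fun (- c f / c e) (rig_row d p f)) (w, i)"
    proof (cases "i < d")
      case True
      define S where "S = (\<Sum>f\<in>J. c f * rig_entry p f w i)"
      have h0: "c e * rig_entry p e w i + S = 0" using c True sp[of w i] unfolding S_def by simp
      have h1: "(\<Sum>f\<in>J. (- c f / c e) * rig_entry p f w i) = - S / c e"
        unfolding S_def by (simp add: sum_divide_distrib sum_negf)
      have "rig_entry p e w i = - S / c e" using h0 ce by (simp add: field_simps)
      then have "rig_entry p e w i = (\<Sum>f\<in>J. (- c f / c e) * rig_entry p f w i)" using h1 by simp
      then show ?thesis using True by (subst rig_row_sum_apply) (simp add: rig_row_def)
    next
      case False
      then show ?thesis by (subst rig_row_sum_apply) (simp add: rig_row_def)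
    qed
  qed
  also have "\<dots> \<in> fun_vs.span (rig_row d p ` J)"
  proof (rule fun_vs.span_sum)
    fix f assume "f \<in> J"
    then have "rig_row d p f \<in> fun_vs.span (rig_row d p ` J)" by (intro fun_vs.span_base) simp
    then show "scale_fun (- c f / c e) (rig_row d p f) \<in> fun_vs.span (rig_row d p ` J)" by (rule fun_vs.span_scale)
  qed
  finally show ?thesis .
qed

lemma maximal_rows_indep_card:
  assumes F: "finite F" and J: "J \<subseteq> F" "rows_indep d p J"
    and max: "\<forall>e\<in>F - J. \<not> rows_indep d p (insert e J)"
  shows "card J = row_rank d p F"
proof (rule antisym)
  show "card J \<le> row_rank d p F" using card_le_row_rank[OF F J] .
  obtain I where I: "I \<subseteq> F" "rows_indep d p I" "card I = row_rank d p F" using row_rank_basis F by blast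
  have fJ: "finite J" using F J(1) finite_subset by blast
  have fI: "finite I" using F I(1) finite_subset by blast
  have "rig_row d p ` F \<subseteq> fun_vs.span (rig_row d p ` J)"
  proof
    fix x assume "x \<in> rig_row d p ` F"
    then obtain e where e: "e \<in> F" "x = rig_row d p e" by blast
    show "x \<in> fun_vs.span (rig_row d p ` J)"
    proof (cases "e \<in> J")
      case True
      then show ?thesis using e by (simp add: fun_vs.span_base)
    next
      case False
      then show ?thesis using rig_row_in_span_of_maximal[OF J(2) fJ] max e by blast
    qed
  qed
  then have "rig_row d p ` I \<subseteq> fun_vs.span (rig_row d p ` J)" using I(1) by blast
  then have "card (rig_row d p ` I) \<le> card (rig_row d p ` J)"
    using fun_vs.independent_span_bound[of "rig_row d p ` J" "rig_row d p ` I"] fJ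
      indep_family_independent[OF fI I(2)[unfolded rows_indep_iff_indep_family]] by simp
  moreover have "card (rig_row d p ` I) = card I"
    using indep_family_inj_on[OF fI I(2)[unfolded rows_indep_iff_indep_family]] by (simp add: card_image)
  moreover have "card (rig_row d p ` J) \<le> card J" by (rule card_image_le[OF fJ])
  ultimately show "row_rank d p F \<le> card J" using I(3) by simp
qed

lemma rows_indep_extend_basis:
  assumes F: "finite F" and I: "I \<subseteq> F" "rows_indep d p I"
  obtains J where "I \<subseteq> J" "J \<subseteq> F" "rows_indep d p J" "card J = row_rank d p F"
proof -
  define S where "S = {J. I \<subseteq> J \<and> J \<subseteq> F \<and> rows_indep d p J}"
  have "S \<subseteq> Pow F" unfolding S_def by auto
  moreover have "finite (Pow F)" using F by simp
  ultimately have fS: "finite S" by (rule finite_subset)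
  have IS: "I \<in> S" unfolding S_def using I by simp
  define n where "n = Max (card ` S)"
  have "n \<in> card ` S" unfolding n_def using fS IS by (intro Max_in) auto
  then obtain J where J: "J \<in> S" "card J = n" by blast
  have ge: "\<And>J'. J' \<in> S \<Longrightarrow> card J' \<le> n" unfolding n_def using fS by simp
  have fJ: "finite J" using J(1) F unfolding S_def using finite_subset by blast
  have "\<forall>e\<in>F - J. \<not> rows_indep d p (insert e J)"
  proof (intro ballI notI)
    fix e assume e: "e \<in> F - J" and ind: "rows_indep d p (insert e J)"
    then have "insert e J \<in> S" using J(1) unfolding S_def by auto
    then have "card (insert e J) \<le> n" by (rule ge)
    then show False using e J(2) fJ by simp
  qed
  then have "card J = row_rank d p F" using maximal_rows_indep_card[OF F] J(1) unfolding S_def by blast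
  then show ?thesis using that J(1) unfolding S_def by blast
qed

lemma row_rank_submod:
  assumes X: "finite X" and Y: "finite Y"
  shows "row_rank d p (X \<union> Y) + row_rank d p (X \<inter> Y) \<le> row_rank d p X + row_rank d p Y"
proof -
  obtain I where I: "I \<subseteq> X \<inter> Y" "rows_indep d p I" "card I = row_rank d p (X \<inter> Y)"
    using row_rank_basis X by (metis finite_Int)
  obtain J where J: "I \<subseteq> J" "J \<subseteq> X \<union> Y" "rows_indep d p J" "card J = row_rank d p (X \<union> Y)"
    using rows_indep_extend_basis[of "X \<union> Y" I d p] X Y I by blast
  have fJ: "finite J" using J X Y by (meson finite_UnI finite_subset)
  have a: "card (J \<inter> X) \<le> row_rank d p X"
    by (rule card_le_row_rank[OF X]) (auto intro: rows_indep_subset[OF J(3) _ fJ])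
  have b: "card (J \<inter> Y) \<le> row_rank d p Y"
    by (rule card_le_row_rank[OF Y]) (auto intro: rows_indep_subset[OF J(3) _ fJ])
  have c: "J \<inter> (X \<inter> Y) = I"
  proof -
    have "card (J \<inter> (X \<inter> Y)) \<le> card I"
      using I(3) card_le_row_rank[of "X \<inter> Y" "J \<inter> (X \<inter> Y)" d p] X rows_indep_subset[OF J(3) _ fJ] by auto
    moreover have "I \<subseteq> J \<inter> (X \<inter> Y)" using I J by auto
    ultimately show ?thesis using fJ by (metis card_seteq finite_Int)
  qed
  have e: "card (J \<inter> X) + card (J \<inter> Y) = card J + card (J \<inter> (X \<inter> Y))"
  proof -
    have "card (J \<inter> X) + card (J \<inter> Y) = card ((J \<inter> X) \<union> (J \<inter> Y)) + card ((J \<inter> X) \<inter> (J \<inter> Y))"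
      using fJ by (intro card_Un_Int) auto
    moreover have "(J \<inter> X) \<union> (J \<inter> Y) = J" using J(2) by auto
    moreover have "(J \<inter> X) \<inter> (J \<inter> Y) = J \<inter> (X \<inter> Y)" by auto
    ultimately show ?thesis by simp
  qed
  have "card J + card I \<le> row_rank d p X + row_rank d p Y" using a b c e by simp
  then show ?thesis using I(3) J(4) by simp
qed

section \<open>Generic rank of complete graphs\<close>

lemma rig_entry_edge:
  assumes "z \<noteq> u"
  shows "rig_entry p {z, u} z i = p z i - p u i"
proof -
  have "(THE u'. u' \<in> {z, u} \<and> u' \<noteq> z) = u" using assms by (intro the_equality) auto
  then show ?thesis unfolding rig_entry_def by simp
qed

lemma rig_entry_notin: "w \<notin> e \<Longrightarrow> rig_entry p e w i = 0"
  unfolding rig_entry_def by simp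

lemma generic_star_indep:
  assumes p: "generic V d p" and V: "finite V" and z: "z \<in> V"
    and S: "S \<subseteq> V" "z \<notin> S" "card S \<le> d"
    and h: "\<forall>j<d. (\<Sum>u\<in>S. a u * (p z j - p u j)) = 0" and u: "u \<in> S"
  shows "a u = 0"
proof -
  have "finite S" using S(1) V by (rule finite_subset)
  then obtain xs where xs: "set xs = S" "distinct xs" using finite_distinct_list by blast
  define m where "m = length xs"
  have m: "card S = m" using xs unfolding m_def by (metis distinct_card)
  define us where "us = z # xs"
  have us: "distinct us" "set us \<subseteq> V" "length us = Suc m"
    unfolding us_def m_def using xs S z by auto
  have inj: "inj_on ((!) xs) {..<m}" using xs(2) unfolding m_def by (simp add: inj_on_nth)
  have img: "(!) xs ` {..<m} = S" using xs unfolding m_def by (auto simp: set_conv_nth)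
  define l where "l i = - a (xs ! i)" for i
  have "\<forall>j<d. (\<Sum>i<m. l i * (p (us ! Suc i) j - p (us ! 0) j)) = 0"
  proof (intro allI impI)
    fix j assume j: "j < d"
    have "(\<Sum>i<m. l i * (p (us ! Suc i) j - p (us ! 0) j)) = (\<Sum>i<m. a (xs ! i) * (p z j - p (xs ! i) j))"
      unfolding l_def us_def by (intro sum.cong) (auto simp: algebra_simps)
    also have "\<dots> = (\<Sum>u\<in>(!) xs ` {..<m}. a u * (p z j - p u j))"
      by (simp add: sum.reindex[OF inj])
    also have "\<dots> = 0" using h j img by simp
    finally show "(\<Sum>i<m. l i * (p (us ! Suc i) j - p (us ! 0) j)) = 0" .
  qed
  moreover obtain i where i: "i < m" "u = xs ! i" using u img by blast
  moreover have "m \<le> d" using m S(3) by simp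
  ultimately have "l i = 0" using generic_differences_indep[OF p V us] by blast
  then show ?thesis using i by (simp add: l_def)
qed

lemma rows_indep_add_vertex:
  assumes p: "generic V d p" and V: "finite V"
    and B: "rows_indep d p B" "finite B" "\<forall>e\<in>B. z \<notin> e"
    and z: "z \<in> V" and S: "S \<subseteq> V" "z \<notin> S" "card S \<le> d"
  shows "rows_indep d p (B \<union> (\<lambda>u. {z, u}) ` S)"
  unfolding rows_indep_def
proof (intro allI impI ballI)
  let ?N = "(\<lambda>u. {z, u}) ` S"
  fix c :: "'a set \<Rightarrow> real" and e
  assume h: "\<forall>w i. i < d \<longrightarrow> (\<Sum>e\<in>B \<union> ?N. c e * rig_entry p e w i) = 0" and e: "e \<in> B \<union> ?N"
  have fS: "finite S" using S(1) V by (rule finite_subset)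
  have inj: "inj_on (\<lambda>u. {z, u}) S" using S(2) by (auto intro!: inj_onI simp: doubleton_eq_iff)
  have disj: "B \<inter> ?N = {}" using B(3) by auto
  have split: "(\<Sum>e\<in>B \<union> ?N. c e * rig_entry p e w i)
      = (\<Sum>e\<in>B. c e * rig_entry p e w i) + (\<Sum>u\<in>S. c {z, u} * rig_entry p {z, u} w i)" for w i
    using fS by (simp add: sum.union_disjoint[OF B(2) _ disj] sum.reindex[OF inj])
  have cN: "c {z, u} = 0" if u: "u \<in> S" for u
  proof (rule generic_star_indep[OF p V z S _ u], intro allI impI)
    fix j assume j: "j < d"
    have "(\<Sum>e\<in>B. c e * rig_entry p e z j) = 0"
      using B(3) by (intro sum.neutral) (simp add: rig_entry_notin)
    moreover have "(\<Sum>u\<in>S. c {z, u} * rig_entry p {z, u} z j) = (\<Sum>u\<in>S. c {z, u} * (p z j - p u j))"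
      using S(2) by (intro sum.cong refl) (metis rig_entry_edge)
    ultimately show "(\<Sum>u\<in>S. c {z, u} * (p z j - p u j)) = 0"
      using h j split[of z j] by simp
  qed
  then have "(\<Sum>e\<in>B. c e * rig_entry p e w i) = 0" if "i < d" for w i
    using h that split[of w i] by simp
  then show "c e = 0"
    using e cN rows_indepD[OF B(1)] by blast
qed

definition complete_rank :: "nat \<Rightarrow> nat \<Rightarrow> int" where
  "complete_rank d m = (if m \<le> d then int (m choose 2) else int d * int m - int ((d + 1) choose 2))"

lemma int_choose_2: "int (n choose 2) * 2 = int n * (int n - 1)"
proof (induction n)
  case 0
  then show ?case by simp
next
  case (Suc n)
  have "Suc n choose 2 = n + (n choose 2)"
    using binomial_Suc_Suc[of n 1] by (simp add: numeral_2_eq_2)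
  then show ?case using Suc by (simp add: algebra_simps)
qed

lemma complete_rank_0: "complete_rank d 0 = 0"
  by (simp add: complete_rank_def)

lemma complete_rank_Suc: "complete_rank d (Suc m) = complete_rank d m + int (min m d)"
proof -
  have c2: "Suc m choose 2 = m + (m choose 2)"
    using binomial_Suc_Suc[of m 1] by (simp add: numeral_2_eq_2)
  consider "Suc m \<le> d" | "m = d" | "m > d" by linarith
  then show ?thesis
  proof cases
    case 1
    then show ?thesis unfolding complete_rank_def using c2 by simp
  next
    case 2
    have "int (Suc d choose 2) * 2 = int (Suc d) * (int (Suc d) - 1)" by (rule int_choose_2)
    moreover have "int (d choose 2) * 2 = int d * (int d - 1)" by (rule int_choose_2)
    ultimately show ?thesis unfolding complete_rank_def using 2 by (simp add: algebra_simps)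
  next
    case 3
    then show ?thesis unfolding complete_rank_def by (simp add: algebra_simps)
  qed
qed

lemma complete_rank_small: "m \<le> d + 1 \<Longrightarrow> complete_rank d m = int (m choose 2)"
proof -
  assume "m \<le> d + 1"
  then consider "m \<le> d" | "m = d + 1" by linarith
  then show ?thesis
  proof cases
    case 1
    then show ?thesis by (simp add: complete_rank_def)
  next
    case 2
    have "int (Suc d choose 2) * 2 = int (Suc d) * (int (Suc d) - 1)" by (rule int_choose_2)
    then show ?thesis unfolding complete_rank_def using 2 by (simp add: algebra_simps)
  qed
qed

lemma finite_Kedges: "finite W \<Longrightarrow> finite (Kedges W)"
proof -
  assume "finite W"
  moreover have "Kedges W \<subseteq> Pow W" unfolding Kedges_def by auto
  ultimately show ?thesis by (meson finite_Pow_iff finite_subset)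
qed

lemma card_Kedges: "finite W \<Longrightarrow> card (Kedges W) = card W choose 2"
  unfolding Kedges_def by (rule n_subsets)

lemma Kedges_mono: "W \<subseteq> W' \<Longrightarrow> Kedges W \<subseteq> Kedges W'"
  unfolding Kedges_def by auto

lemma Kedges_Int: "Kedges (W \<inter> W') = Kedges W \<inter> Kedges W'"
  unfolding Kedges_def by auto

lemma rows_indep_add_vertices:
  assumes p: "generic V d p" and V: "finite V" and Z: "Z \<subseteq> V" and W: "W \<subseteq> V" "W \<inter> Z = {}"
    and B: "rows_indep d p B" "finite B" "\<forall>e\<in>B. e \<inter> Z = {}"
  shows "\<exists>N. rows_indep d p (B \<union> N) \<and> B \<inter> N = {} \<and> N \<subseteq> Kedges (W \<union> Z) \<and>
      int (card N) = complete_rank d (card W + card Z) - complete_rank d (card W)"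
proof -
  have "finite Z" using Z V by (rule finite_subset)
  then show ?thesis
    using Z W B
  proof (induction Z rule: finite_induct)
    case empty
    then show ?case by (intro exI[of _ "{}"]) simp
  next
    case (insert z Z)
    have "\<forall>e\<in>B. e \<inter> Z = {}" using insert.prems by auto
    then obtain N where N: "rows_indep d p (B \<union> N)" "B \<inter> N = {}" "N \<subseteq> Kedges (W \<union> Z)"
        "int (card N) = complete_rank d (card W + card Z) - complete_rank d (card W)"
      using insert.IH insert.prems by auto
    have fWZ: "finite (W \<union> Z)" using insert V finite_subset by auto
    have cWZ: "card (W \<union> Z) = card W + card Z"
      using insert fWZ by (intro card_Un_disjoint) auto
    obtain S where S: "S \<subseteq> W \<union> Z" "card S = min (card W + card Z) d"
      using obtain_subset_with_card_n[of "min (card W + card Z) d" "W \<union> Z"] cWZ by auto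
    have zS: "z \<notin> S" using S(1) insert by auto
    have fS: "finite S" using S(1) fWZ by (rule finite_subset)
    have fN: "finite N" using N(3) fWZ finite_Kedges finite_subset by blast
    have BNz: "\<forall>e\<in>B \<union> N. z \<notin> e"
      using insert N(3) unfolding Kedges_def by auto
    define E where "E = (\<lambda>u. {z, u}) ` S"
    have SV: "S \<subseteq> V" using S(1) insert.prems by auto
    have ind: "rows_indep d p (B \<union> (N \<union> E))"
      using rows_indep_add_vertex[OF p V N(1) _ BNz _ SV zS] insert.prems fN S(2)
      unfolding E_def by (simp add: Un_assoc)
    have disj: "(B \<union> N) \<inter> E = {}" using BNz unfolding E_def by auto
    have cE: "card E = card S"
      unfolding E_def using zS by (intro card_image) (auto intro!: inj_onI simp: doubleton_eq_iff)
    have "E \<subseteq> Kedges (W \<union> insert z Z)"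
    proof
      fix e assume "e \<in> E"
      then obtain u where u: "u \<in> S" "e = {z, u}" unfolding E_def by blast
      then have "z \<noteq> u" using zS by auto
      then show "e \<in> Kedges (W \<union> insert z Z)" using u S(1) unfolding Kedges_def by auto
    qed
    moreover have "N \<subseteq> Kedges (W \<union> insert z Z)"
      using N(3) Kedges_mono[of "W \<union> Z" "W \<union> insert z Z"] by auto
    moreover have "card (N \<union> E) = card N + card E"
      using fN fS disj unfolding E_def by (intro card_Un_disjoint) auto
    moreover have "card W + card (insert z Z) = Suc (card W + card Z)" using insert by simp
    ultimately show ?case
      using ind disj N(2,4) cE S(2) complete_rank_Suc[of d "card W + card Z"]
      by (intro exI[of _ "N \<union> E"]) auto
  qed
qed

lemma complete_rank_le_row_rank:
  assumes p: "generic V d p" and V: "finite V" and X: "X \<subseteq> V"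
  shows "complete_rank d (card X) \<le> int (row_rank d p (Kedges X))"
proof -
  obtain N where N: "rows_indep d p N" "N \<subseteq> Kedges X" "int (card N) = complete_rank d (card X)"
    using rows_indep_add_vertices[where W = "{}" and B = "{}", OF p V X] rows_indep_empty
    by (auto simp: complete_rank_0)
  have "finite X" using X V by (rule finite_subset)
  then have "card N \<le> row_rank d p (Kedges X)"
    using card_le_row_rank[OF finite_Kedges] N(1,2) by blast
  then show ?thesis using N(3) by simp
qed

lemma independent_family_card_le:
  fixes g :: "'k \<Rightarrow> 'b \<Rightarrow> real"
  assumes K: "finite K" and Q: "finite Q" and ind: "indep_family K g"
    and supp: "\<And>k q. k \<in> K \<Longrightarrow> q \<notin> Q \<Longrightarrow> g k q = 0"
  shows "card K \<le> card Q"
proof -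
  define unit_fun :: "'b \<Rightarrow> 'b \<Rightarrow> real" where "unit_fun q = (\<lambda>x. if x = q then 1 else 0)" for q
  have "g ` K \<subseteq> fun_vs.span (unit_fun ` Q)"
  proof
    fix y assume "y \<in> g ` K"
    then obtain k where k: "k \<in> K" "y = g k" by blast
    have "g k = (\<Sum>q\<in>Q. scale_fun (g k q) (unit_fun q))"
    proof
      fix x
      have "(\<Sum>q\<in>Q. scale_fun (g k q) (unit_fun q)) x = (\<Sum>q\<in>Q. if q = x then g k x else 0)"
        unfolding sum_fun_apply by (rule sum.cong) (auto simp: unit_fun_def)
      also have "\<dots> = g k x" using Q supp[OF k(1), of x] by (simp add: sum.delta)
      finally show "g k x = (\<Sum>q\<in>Q. scale_fun (g k q) (unit_fun q)) x" by simp
    qed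
    also have "\<dots> \<in> fun_vs.span (unit_fun ` Q)"
      by (intro fun_vs.span_sum fun_vs.span_scale fun_vs.span_base) simp
    finally show "y \<in> fun_vs.span (unit_fun ` Q)" using k by simp
  qed
  then have "card (g ` K) \<le> card (unit_fun ` Q)"
    using fun_vs.independent_span_bound[OF finite_imageI[OF Q] indep_family_independent[OF K ind]]
    by simp
  also have "\<dots> \<le> card Q" by (rule card_image_le[OF Q])
  finally show ?thesis using card_image[OF indep_family_inj_on[OF K ind]] by simp
qed

definition fun_inner :: "'b set \<Rightarrow> ('b \<Rightarrow> real) \<Rightarrow> ('b \<Rightarrow> real) \<Rightarrow> real" where
  "fun_inner Q f g = (\<Sum>q\<in>Q. f q * g q)"

lemma fun_inner_sum_right:
  "fun_inner Q f (\<Sum>j\<in>J. scale_fun (c j) (h j)) = (\<Sum>j\<in>J. c j * fun_inner Q f (h j))"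
proof -
  have "fun_inner Q f (\<Sum>j\<in>J. scale_fun (c j) (h j)) = (\<Sum>q\<in>Q. \<Sum>j\<in>J. f q * (c j * h j q))"
    unfolding fun_inner_def sum_fun_apply by (simp add: sum_distrib_left)
  also have "\<dots> = (\<Sum>j\<in>J. \<Sum>q\<in>Q. c j * (f q * h j q))"
    by (subst sum.swap) (simp add: mult_ac)
  also have "\<dots> = (\<Sum>j\<in>J. c j * fun_inner Q f (h j))"
    unfolding fun_inner_def by (simp add: sum_distrib_left)
  finally show ?thesis .
qed

lemma fun_inner_sum_left:
  "fun_inner Q (\<Sum>j\<in>J. scale_fun (c j) (h j)) f = (\<Sum>j\<in>J. c j * fun_inner Q (h j) f)"
proof -
  have "fun_inner Q (\<Sum>j\<in>J. scale_fun (c j) (h j)) f = fun_inner Q f (\<Sum>j\<in>J. scale_fun (c j) (h j))"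
    unfolding fun_inner_def by (simp add: mult_ac)
  also have "\<dots> = (\<Sum>j\<in>J. c j * fun_inner Q f (h j))" by (rule fun_inner_sum_right)
  also have "\<dots> = (\<Sum>j\<in>J. c j * fun_inner Q (h j) f)" unfolding fun_inner_def by (simp add: mult_ac)
  finally show ?thesis .
qed

lemma fun_inner_self_eq_0:
  assumes "finite Q" "fun_inner Q x x = 0" "q \<in> Q"
  shows "x q = 0"
proof -
  have "\<forall>q\<in>Q. x q * x q = 0"
    using assms(1,2) unfolding fun_inner_def by (subst sum_nonneg_eq_0_iff[symmetric]) auto
  then show ?thesis using assms(3) by simp
qed

lemma fun_inner_minus_right: "fun_inner Q f (- g) = - fun_inner Q f g"
  unfolding fun_inner_def by (simp add: sum_negf)

lemma orthogonal_families_card_le: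
  assumes K: "finite K" and L: "finite L" and Q: "finite Q"
    and g: "indep_family K g" and h: "indep_family L h"
    and orth: "\<And>k m. k \<in> K \<Longrightarrow> m \<in> L \<Longrightarrow> fun_inner Q (g k) (h m) = 0"
    and supp_g: "\<And>k q. k \<in> K \<Longrightarrow> q \<notin> Q \<Longrightarrow> g k q = 0"
    and supp_h: "\<And>m q. m \<in> L \<Longrightarrow> q \<notin> Q \<Longrightarrow> h m q = 0"
  shows "card K + card L \<le> card Q"
proof -
  have "indep_family (K <+> L) (case_sum g h)"
    unfolding indep_family_def
  proof (intro allI impI)
    fix l assume s: "(\<Sum>k\<in>K <+> L. scale_fun (l k) (case_sum g h k)) = 0"
    define x where "x = (\<Sum>k\<in>K. scale_fun (l (Inl k)) (g k))"
    define y where "y = (\<Sum>m\<in>L. scale_fun (l (Inr m)) (h m))"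
    have xy: "x + y = 0" using s K L by (simp add: sum.Plus x_def y_def comp_def)
    have "fun_inner Q x y = 0"
      unfolding x_def y_def fun_inner_sum_left fun_inner_sum_right using orth by simp
    moreover have "y = - x" using xy by (simp add: eq_neg_iff_add_eq_0 add.commute)
    ultimately have "fun_inner Q x x = 0" by (simp add: fun_inner_minus_right)
    then have "x q = 0" for q
      using fun_inner_self_eq_0[OF Q] supp_g unfolding x_def sum_fun_apply
      by (cases "q \<in> Q") (simp_all add: x_def)
    then have "x = 0" by (simp add: fun_eq_iff)
    then have "y = 0" using xy by simp
    note \<open>x = 0\<close> \<open>y = 0\<close>
    then show "\<forall>k\<in>K <+> L. l k = 0"
      using indep_familyD[OF g, of "\<lambda>k. l (Inl k)"] indep_familyD[OF h, of "\<lambda>m. l (Inr m)"]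
      unfolding x_def y_def by blast
  qed
  then have "card (K <+> L) \<le> card Q"
    by (rule independent_family_card_le[OF finite_Plus[OF K L] Q]) (auto simp: supp_g supp_h)
  then show ?thesis using card_Plus[OF K L] by simp
qed

lemma fun_inner_rig_row:
  assumes X: "finite X" and uv: "u \<in> X" "v \<in> X" "u \<noteq> v"
  shows "fun_inner (X \<times> {..<d}) (rig_row d p {u, v}) z = (\<Sum>i<d. (p u i - p v i) * (z (u, i) - z (v, i)))"
proof -
  let ?f = "\<lambda>q. rig_row d p {u, v} q * z q"
  have "fun_inner (X \<times> {..<d}) (rig_row d p {u, v}) z = (\<Sum>q\<in>{u, v} \<times> {..<d}. ?f q)"
    unfolding fun_inner_def
  proof (rule sum.mono_neutral_right)
    show "finite (X \<times> {..<d})" using X by simp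
    show "{u, v} \<times> {..<d} \<subseteq> X \<times> {..<d}" using uv by auto
    show "\<forall>q\<in>X \<times> {..<d} - {u, v} \<times> {..<d}. ?f q = 0"
    proof
      fix q assume q: "q \<in> X \<times> {..<d} - {u, v} \<times> {..<d}"
      obtain w i where wi: "q = (w, i)" by (cases q)
      have "w \<notin> {u, v}" using q wi by auto
      then show "?f q = 0" using wi by (simp add: rig_row_def rig_entry_notin)
    qed
  qed
  also have "\<dots> = (\<Sum>w\<in>{u, v}. \<Sum>i<d. ?f (w, i))"
    by (simp add: sum.cartesian_product)
  also have "\<dots> = (\<Sum>i<d. ?f (u, i)) + (\<Sum>i<d. ?f (v, i))" using uv by simp
  also have "\<dots> = (\<Sum>i<d. (p u i - p v i) * z (u, i) + (p v i - p u i) * z (v, i))"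
  proof -
    have eu: "rig_entry p {u, v} u i = p u i - p v i" for i using rig_entry_edge[OF uv(3)] .
    have ev: "rig_entry p {u, v} v i = p v i - p u i" for i
      using rig_entry_edge[of v u p i] uv(3) by (simp add: insert_commute)
    show ?thesis by (simp add: rig_row_def eu ev sum.distrib)
  qed
  also have "\<dots> = (\<Sum>i<d. (p u i - p v i) * (z (u, i) - z (v, i)))"
    by (rule sum.cong) (auto simp: algebra_simps)
  finally show ?thesis .
qed

lemma rig_row_outside:
  assumes "e \<subseteq> X" "q \<notin> X \<times> {..<d}"
  shows "rig_row d p e q = 0"
  using assms by (cases q) (auto simp: rig_row_def rig_entry_def)

definition translation :: "'a set \<Rightarrow> nat \<Rightarrow> nat \<Rightarrow> ('a \<times> nat \<Rightarrow> real)" where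
  "translation X d a = (\<lambda>(w, i). if w \<in> X \<and> i < d \<and> i = a then 1 else 0)"

definition rotation :: "'a set \<Rightarrow> nat \<Rightarrow> ('a \<Rightarrow> nat \<Rightarrow> real) \<Rightarrow> nat \<times> nat \<Rightarrow> ('a \<times> nat \<Rightarrow> real)" where
  "rotation X d p t = (\<lambda>(w, i). if w \<in> X \<and> i < d then
      (if i = fst t then p w (snd t) else 0) - (if i = snd t then p w (fst t) else 0) else 0)"

definition index_pairs :: "nat \<Rightarrow> (nat \<times> nat) set" where
  "index_pairs d = Sigma {..<d} (\<lambda>a. {a<..<d})"

definition trivial_motion :: "'a set \<Rightarrow> nat \<Rightarrow> ('a \<Rightarrow> nat \<Rightarrow> real) \<Rightarrow> nat + nat \<times> nat \<Rightarrow> 'a \<times> nat \<Rightarrow> real" where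
  "trivial_motion X d p = case_sum (translation X d) (rotation X d p)"

lemma trivial_motion_outside: "q \<notin> X \<times> {..<d} \<Longrightarrow> trivial_motion X d p k q = 0"
  by (cases q; cases k) (auto simp: trivial_motion_def translation_def rotation_def)

lemma rig_row_orthogonal_translation:
  assumes X: "finite X" and e: "e \<in> Kedges X"
  shows "fun_inner (X \<times> {..<d}) (rig_row d p e) (translation X d a) = 0"
proof -
  obtain u v where uv: "e = {u, v}" "u \<noteq> v" using e unfolding Kedges_def by (auto simp: card_2_iff)
  have "u \<in> X" "v \<in> X" using e uv unfolding Kedges_def by auto
  then show ?thesis using fun_inner_rig_row[OF X _ _ uv(2)] uv(1) by (simp add: translation_def)
qed

lemma rig_row_orthogonal_rotation:
  assumes X: "finite X" and e: "e \<in> Kedges X" and t: "t \<in> index_pairs d"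
  shows "fun_inner (X \<times> {..<d}) (rig_row d p e) (rotation X d p t) = 0"
proof -
  obtain u v where uv: "e = {u, v}" "u \<noteq> v" using e unfolding Kedges_def by (auto simp: card_2_iff)
  have uvX: "u \<in> X" "v \<in> X" using e uv unfolding Kedges_def by auto
  obtain a b where ab: "t = (a, b)" "a < d" "b < d" using t unfolding index_pairs_def by auto
  have "fun_inner (X \<times> {..<d}) (rig_row d p e) (rotation X d p t) =
     (\<Sum>i<d. (p u i - p v i) * ((if i = a then p u b - p v b else 0) - (if i = b then p u a - p v a else 0)))"
    unfolding uv(1) fun_inner_rig_row[OF X uvX uv(2)]
    by (rule sum.cong) (auto simp: rotation_def ab uvX)
  also have "\<dots> = (\<Sum>i<d. (if i = a then (p u a - p v a) * (p u b - p v b) else 0)) -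
                    (\<Sum>i<d. (if i = b then (p u b - p v b) * (p u a - p v a) else 0))"
    by (subst sum_subtractf[symmetric]) (rule sum.cong, auto simp: right_diff_distrib)
  also have "\<dots> = (p u a - p v a) * (p u b - p v b) - (p u b - p v b) * (p u a - p v a)"
    using ab by (simp add: sum.delta)
  also have "\<dots> = 0" by simp
  finally show ?thesis .
qed

lemma card_index_pairs: "card (index_pairs d) = d choose 2"
proof -
  have "bij_betw (\<lambda>(a, b). {a, b}) (index_pairs d) {B. B \<subseteq> {..<d} \<and> card B = 2}"
    unfolding bij_betw_def
  proof (intro conjI)
    show "inj_on (\<lambda>(a, b). {a, b}) (index_pairs d)"
    proof (rule inj_onI, clarify)
      fix a b a' b' assume "(a, b) \<in> index_pairs d" "(a', b') \<in> index_pairs d" "{a, b} = {a', b'}"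
      then show "a = a' \<and> b = b'" unfolding index_pairs_def by (auto simp: doubleton_eq_iff)
    qed
    show "(\<lambda>(a, b). {a, b}) ` index_pairs d = {B. B \<subseteq> {..<d} \<and> card B = 2}"
    proof
      show "(\<lambda>(a, b). {a, b}) ` index_pairs d \<subseteq> {B. B \<subseteq> {..<d} \<and> card B = 2}"
        unfolding index_pairs_def by auto
      show "{B. B \<subseteq> {..<d} \<and> card B = 2} \<subseteq> (\<lambda>(a, b). {a, b}) ` index_pairs d"
      proof
        fix B assume "B \<in> {B. B \<subseteq> {..<d} \<and> card B = 2}"
        then have B: "B \<subseteq> {..<d}" "card B = 2" by auto
        then obtain x y where xy: "B = {x, y}" "x \<noteq> y" by (auto simp: card_2_iff)
        show "B \<in> (\<lambda>(a, b). {a, b}) ` index_pairs d"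
        proof (cases "x < y")
          case True
          then have "(x, y) \<in> index_pairs d" using B xy unfolding index_pairs_def by auto
          then show ?thesis using xy by force
        next
          case False
          then have "y < x" using xy by simp
          then have "(y, x) \<in> index_pairs d" using B xy unfolding index_pairs_def by auto
          moreover have "B = {y, x}" using xy by auto
          ultimately show ?thesis by force
        qed
      qed
    qed
  qed
  then have "card (index_pairs d) = card {B. B \<subseteq> {..<d} \<and> card B = 2}" by (rule bij_betw_same_card)
  also have "\<dots> = d choose 2" using n_subsets[of "{..<d}" 2] by simp
  finally show ?thesis .
qed


lemma rig_row_orthogonal_trivial_motion:
  assumes "finite X" "e \<in> Kedges X" "k \<in> {..<d} <+> index_pairs d"
  shows "fun_inner (X \<times> {..<d}) (rig_row d p e) (trivial_motion X d p k) = 0"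
  using assms rig_row_orthogonal_translation rig_row_orthogonal_rotation
  by (auto simp: trivial_motion_def)

lemma card_trivial_motion_index: "card ({..<d} <+> index_pairs d) = (d + 1) choose 2"
proof -
  have "(d + 1) choose 2 = d + (d choose 2)"
    using binomial_Suc_Suc[of d 1] by (simp add: numeral_2_eq_2)
  moreover have "finite (index_pairs d)" unfolding index_pairs_def by simp
  ultimately show ?thesis by (simp add: card_Plus card_index_pairs)
qed

definition skew_mat :: "(nat \<times> nat \<Rightarrow> real) \<Rightarrow> nat \<Rightarrow> nat \<Rightarrow> real" where
  "skew_mat \<sigma> i j = (if i < j then \<sigma> (i, j) else if j < i then - \<sigma> (j, i) else 0)"

lemma sum_rotation_eq:
  fixes \<sigma> :: "nat \<times> nat \<Rightarrow> real" and q :: "nat \<Rightarrow> real"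
  assumes i: "i < d"
  shows "(\<Sum>t\<in>index_pairs d. \<sigma> t * ((if i = fst t then q (snd t) else 0) - (if i = snd t then q (fst t) else 0)))
     = (\<Sum>b\<in>{i<..<d}. \<sigma> (i, b) * q b) - (\<Sum>a\<in>{..<i}. \<sigma> (a, i) * q a)"
proof -
  have "(\<Sum>t\<in>index_pairs d. \<sigma> t * ((if i = fst t then q (snd t) else 0) - (if i = snd t then q (fst t) else 0)))
      = (\<Sum>a<d. \<Sum>b\<in>{a<..<d}. \<sigma> (a, b) * ((if i = a then q b else 0) - (if i = b then q a else 0)))"
    unfolding index_pairs_def by (simp add: sum.Sigma split_def)
  also have "\<dots> = (\<Sum>a<d. \<Sum>b\<in>{a<..<d}. (if i = a then \<sigma> (a, b) * q b else 0))
      - (\<Sum>a<d. \<Sum>b\<in>{a<..<d}. (if i = b then \<sigma> (a, b) * q a else 0))"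
    by (simp only: sum_subtractf[symmetric]) (intro sum.cong refl, auto simp: algebra_simps)
  also have "(\<Sum>a<d. \<Sum>b\<in>{a<..<d}. (if i = a then \<sigma> (a, b) * q b else 0))
      = (\<Sum>a<d. if i = a then (\<Sum>b\<in>{a<..<d}. \<sigma> (a, b) * q b) else 0)"
    by (rule sum.cong) auto
  also have "\<dots> = (\<Sum>b\<in>{i<..<d}. \<sigma> (i, b) * q b)" using i by (simp add: sum.delta')
  also have "(\<Sum>a<d. \<Sum>b\<in>{a<..<d}. (if i = b then \<sigma> (a, b) * q a else 0))
      = (\<Sum>a<d. if a < i then \<sigma> (a, i) * q a else 0)"
  proof (rule sum.cong[OF refl])
    fix a assume "a \<in> {..<d}"
    have "(\<Sum>b\<in>{a<..<d}. (if i = b then \<sigma> (a, b) * q a else 0)) = (if i \<in> {a<..<d} then \<sigma> (a, i) * q a else 0)"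
      by (simp add: sum.delta')
    then show "(\<Sum>b\<in>{a<..<d}. (if i = b then \<sigma> (a, b) * q a else 0)) = (if a < i then \<sigma> (a, i) * q a else 0)"
      using i by auto
  qed
  also have "\<dots> = (\<Sum>a\<in>{..<i}. \<sigma> (a, i) * q a)"
  proof -
    have "(\<Sum>a<d. if a < i then \<sigma> (a, i) * q a else 0) = (\<Sum>a\<in>{a\<in>{..<d}. a < i}. \<sigma> (a, i) * q a)"
      by (rule sum.inter_filter[symmetric]) simp
    moreover have "{a\<in>{..<d}. a < i} = {..<i}" using i by auto
    ultimately show ?thesis by simp
  qed
  finally show ?thesis .
qed

lemma sum_skew_mat_eq:
  fixes \<sigma> :: "nat \<times> nat \<Rightarrow> real" and q :: "nat \<Rightarrow> real"
  assumes i: "i < d"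
  shows "(\<Sum>j<d. skew_mat \<sigma> i j * q j)
     = (\<Sum>b\<in>{i<..<d}. \<sigma> (i, b) * q b) - (\<Sum>a\<in>{..<i}. \<sigma> (a, i) * q a)"
proof -
  have "(\<Sum>j<d. skew_mat \<sigma> i j * q j) = (\<Sum>j<d. (if i < j then \<sigma> (i, j) * q j else 0) + (if j < i then - (\<sigma> (j, i) * q j) else 0))"
    by (rule sum.cong) (auto simp: skew_mat_def)
  also have "\<dots> = (\<Sum>j<d. if i < j then \<sigma> (i, j) * q j else 0) + (\<Sum>j<d. if j < i then - (\<sigma> (j, i) * q j) else 0)"
    by (rule sum.distrib)
  also have "(\<Sum>j<d. if i < j then \<sigma> (i, j) * q j else 0) = (\<Sum>j\<in>{j\<in>{..<d}. i < j}. \<sigma> (i, j) * q j)"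
    by (rule sum.inter_filter[symmetric]) simp
  also have "{j\<in>{..<d}. i < j} = {i<..<d}" by auto
  also have "(\<Sum>j<d. if j < i then - (\<sigma> (j, i) * q j) else 0) = (\<Sum>j\<in>{j\<in>{..<d}. j < i}. - (\<sigma> (j, i) * q j))"
    by (rule sum.inter_filter[symmetric]) simp
  also have "{j\<in>{..<d}. j < i} = {..<i}" using i by auto
  finally show ?thesis by (simp add: sum_negf)
qed

lemma sum_rotation_eq_skew_mat:
  assumes i: "i < d"
  shows "(\<Sum>t\<in>index_pairs d. \<sigma> t * ((if i = fst t then q (snd t) else 0) - (if i = snd t then q (fst t) else 0)))
     = (\<Sum>j<d. skew_mat \<sigma> i j * q j)"
  unfolding sum_rotation_eq[OF i] sum_skew_mat_eq[OF i] ..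

lemma sum_trivial_motions_apply:
  assumes w: "w \<in> X" and i: "i < d"
  shows "(\<Sum>k\<in>{..<d} <+> index_pairs d. scale_fun (l k) (trivial_motion X d p k)) (w, i)
    = l (Inl i) + (\<Sum>j<d. skew_mat (\<lambda>t. l (Inr t)) i j * p w j)"
proof -
  have "finite (index_pairs d)" unfolding index_pairs_def by simp
  then have "(\<Sum>k\<in>{..<d} <+> index_pairs d. scale_fun (l k) (trivial_motion X d p k)) (w, i)
      = (\<Sum>a<d. l (Inl a) * translation X d a (w, i))
        + (\<Sum>t\<in>index_pairs d. l (Inr t) * rotation X d p t (w, i))"
    by (simp add: sum.Plus sum_fun_apply trivial_motion_def)
  also have "(\<Sum>a<d. l (Inl a) * translation X d a (w, i)) = l (Inl i)"
    using w i by (simp add: translation_def if_distrib[of "\<lambda>x. _ * x"] sum.delta' cong: if_cong)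
  also have "(\<Sum>t\<in>index_pairs d. l (Inr t) * rotation X d p t (w, i))
      = (\<Sum>t\<in>index_pairs d. l (Inr t) *
          ((if i = fst t then p w (snd t) else 0) - (if i = snd t then p w (fst t) else 0)))"
    using w i by (simp add: rotation_def)
  also have "\<dots> = (\<Sum>j<d. skew_mat (\<lambda>t. l (Inr t)) i j * p w j)"
    by (rule sum_rotation_eq_skew_mat[OF i])
  finally show ?thesis .
qed

text \<open>Genericity enters through d + 1 points of X in general position: the motion vanishes at
  all of them only if its skew-symmetric part and its translation part vanish.\<close>
lemma trivial_motions_indep:
  assumes p: "generic V d p" and V: "finite V" and X: "X \<subseteq> V" "d + 1 \<le> card X"
  shows "indep_family ({..<d} <+> index_pairs d) (trivial_motion X d p)"
  unfolding indep_family_def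
proof (intro allI impI)
  fix l assume s: "(\<Sum>k\<in>{..<d} <+> index_pairs d. scale_fun (l k) (trivial_motion X d p k)) = 0"
  define \<sigma> where "\<sigma> t = l (Inr t)" for t
  have zero: "l (Inl i) + (\<Sum>j<d. skew_mat \<sigma> i j * p w j) = 0" if "w \<in> X" "i < d" for w i
    using sum_trivial_motions_apply[OF that, of l p] s unfolding \<sigma>_def by simp
  obtain Y where Y: "Y \<subseteq> X" "card Y = d + 1" using obtain_subset_with_card_n[OF X(2)] by blast
  have "finite Y" using Y X V by (meson finite_subset)
  then obtain us where us0: "set us = Y" "distinct us" using finite_distinct_list by blast
  have us: "distinct us" "set us \<subseteq> V" "length us = Suc d"
    using us0 Y X by (auto simp: distinct_card[symmetric])
  have usX: "us ! k \<in> X" if "k \<le> d" for k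
    using that us0 Y us(3) by (metis le_imp_less_Suc nth_mem subsetD)
  have S0: "skew_mat \<sigma> i j = 0" if i: "i < d" and j: "j < d" for i j
  proof (rule generic_differences_functional_zero[OF p V us _ j], intro allI impI)
    fix k assume "k < d"
    then have "(\<Sum>j<d. skew_mat \<sigma> i j * p (us ! Suc k) j) - (\<Sum>j<d. skew_mat \<sigma> i j * p (us ! 0) j) = 0"
      using zero[OF usX[of "Suc k"] i] zero[OF usX[of 0] i] by simp
    then show "(\<Sum>j<d. skew_mat \<sigma> i j * (p (us ! Suc k) j - p (us ! 0) j)) = 0"
      by (simp add: right_diff_distrib sum_subtractf)
  qed
  have "l (Inl i) = 0" if "i < d" for i
    using zero[OF usX[of 0] that] S0[OF that] by simp
  moreover have "\<sigma> t = 0" if t: "t \<in> index_pairs d" for t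
  proof -
    obtain a b where "t = (a, b)" "a < b" "b < d" using t unfolding index_pairs_def by auto
    then show ?thesis using S0[of a b] by (simp add: skew_mat_def)
  qed
  ultimately show "\<forall>k\<in>{..<d} <+> index_pairs d. l k = 0"
    unfolding \<sigma>_def by auto
qed

text \<open>The rows of K_X and the (d + 1) choose 2 trivial motions are mutually orthogonal
  independent families of functions on X \<times> {..<d}.\<close>
lemma row_rank_Kedges_le:
  assumes p: "generic V d p" and V: "finite V" and X: "X \<subseteq> V" "d + 1 \<le> card X"
  shows "int (row_rank d p (Kedges X)) + int ((d + 1) choose 2) \<le> int d * int (card X)"
proof -
  have fX: "finite X" using X(1) V by (rule finite_subset)
  obtain I where I: "I \<subseteq> Kedges X" "rows_indep d p I" "card I = row_rank d p (Kedges X)"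
    using row_rank_basis[OF finite_Kedges[OF fX]] .
  have "finite (index_pairs d)" unfolding index_pairs_def by simp
  moreover have "finite I" using I(1) finite_Kedges[OF fX] by (rule finite_subset)
  ultimately have "card I + card ({..<d} <+> index_pairs d) \<le> card (X \<times> {..<d})"
    using fX
  proof (intro orthogonal_families_card_le[where g = "rig_row d p" and h = "trivial_motion X d p"])
    show "indep_family I (rig_row d p)" using I(2) by (simp add: rows_indep_iff_indep_family)
    show "indep_family ({..<d} <+> index_pairs d) (trivial_motion X d p)"
      by (rule trivial_motions_indep[OF p V X])
    show "fun_inner (X \<times> {..<d}) (rig_row d p e) (trivial_motion X d p k) = 0"
      if "e \<in> I" "k \<in> {..<d} <+> index_pairs d" for e k
      using that I(1) fX by (intro rig_row_orthogonal_trivial_motion) auto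
    show "rig_row d p e q = 0" if "e \<in> I" "q \<notin> X \<times> {..<d}" for e q
      using that I(1) by (intro rig_row_outside) (auto simp: Kedges_def)
    show "trivial_motion X d p k q = 0" if "q \<notin> X \<times> {..<d}" for k q
      using that by (rule trivial_motion_outside)
  qed auto
  then show ?thesis
    using I(3) fX by (simp add: card_trivial_motion_index card_cartesian_product mult.commute
        flip: of_nat_add of_nat_mult)
qed

lemma row_rank_Kedges:
  assumes p: "generic V d p" and V: "finite V" and X: "X \<subseteq> V"
  shows "int (row_rank d p (Kedges X)) = complete_rank d (card X)"
proof -
  have fX: "finite X" using X V by (rule finite_subset)
  have "int (row_rank d p (Kedges X)) \<le> complete_rank d (card X)"
  proof (cases "card X \<le> d + 1")
    case True
    have "row_rank d p (Kedges X) \<le> card (Kedges X)" by (rule row_rank_le_card[OF finite_Kedges[OF fX]])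
    then show ?thesis using complete_rank_small[OF True] card_Kedges[OF fX] by simp
  next
    case False
    then show ?thesis using row_rank_Kedges_le[OF p V X] unfolding complete_rank_def by simp
  qed
  then show ?thesis using complete_rank_le_row_rank[OF p V X] by simp
qed

text \<open>Glue K_X and K_Y along K_(X \<inter> Y) by adding the vertices of X - Y and of Y - X one at a time.\<close>
lemma complete_rank_modular:
  assumes p: "generic V d p" and V: "finite V" and X: "X \<subseteq> V" and Y: "Y \<subseteq> V"
  shows "complete_rank d (card X) + complete_rank d (card Y) - complete_rank d (card (X \<inter> Y))
    \<le> int (row_rank d p (Kedges X \<union> Kedges Y))"
proof -
  have fX: "finite X" and fY: "finite Y" using X Y V finite_subset by auto
  have cX: "card (X \<inter> Y) + card (X - Y) = card X"
    using fX by (metis Int_Diff_disjoint Int_Diff_Un card_Un_disjoint finite_Diff finite_Int)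
  have cY: "card (X \<inter> Y) + card (Y - X) = card Y"
    using fY by (metis Int_Diff_disjoint Int_Diff_Un Int_commute card_Un_disjoint finite_Diff finite_Int)
  have KX: "(X \<inter> Y) \<union> (X - Y) = X" and KY: "(X \<inter> Y) \<union> (Y - X) = Y" by auto
  obtain N0 where N0: "rows_indep d p N0" "N0 \<subseteq> Kedges (X \<inter> Y)"
      "int (card N0) = complete_rank d (card (X \<inter> Y))"
    using rows_indep_add_vertices[where W = "{}" and B = "{}" and Z = "X \<inter> Y", OF p V] X rows_indep_empty
    by (auto simp: complete_rank_0)
  have fN0: "finite N0" using N0(2) fX finite_Kedges finite_subset by (metis finite_Int)
  have "\<exists>N. rows_indep d p (N0 \<union> N) \<and> N0 \<inter> N = {} \<and> N \<subseteq> Kedges ((X \<inter> Y) \<union> (X - Y)) \<and>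
      int (card N) = complete_rank d (card (X \<inter> Y) + card (X - Y)) - complete_rank d (card (X \<inter> Y))"
    by (rule rows_indep_add_vertices[OF p V _ _ _ N0(1) fN0]) (use N0(2) X in \<open>auto simp: Kedges_def\<close>)
  then obtain N1 where N1: "rows_indep d p (N0 \<union> N1)" "N0 \<inter> N1 = {}" "N1 \<subseteq> Kedges X"
      "int (card N1) = complete_rank d (card X) - complete_rank d (card (X \<inter> Y))"
    unfolding KX cX by blast
  have fN1: "finite N1" using N1(3) fX finite_Kedges finite_subset by blast
  have N01X: "N0 \<union> N1 \<subseteq> Kedges X" using N0(2) N1(3) Kedges_mono[of "X \<inter> Y" X] by auto
  have "\<exists>N. rows_indep d p (N0 \<union> N1 \<union> N) \<and> (N0 \<union> N1) \<inter> N = {} \<and> N \<subseteq> Kedges ((X \<inter> Y) \<union> (Y - X)) \<and>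
      int (card N) = complete_rank d (card (X \<inter> Y) + card (Y - X)) - complete_rank d (card (X \<inter> Y))"
    by (rule rows_indep_add_vertices[OF p V _ _ _ N1(1)]) (use N01X X Y fN0 fN1 in \<open>auto simp: Kedges_def\<close>)
  then obtain N2 where N2: "rows_indep d p (N0 \<union> N1 \<union> N2)" "(N0 \<union> N1) \<inter> N2 = {}" "N2 \<subseteq> Kedges Y"
      "int (card N2) = complete_rank d (card Y) - complete_rank d (card (X \<inter> Y))"
    unfolding KY cY by blast
  have "finite N2" using N2(3) fY finite_Kedges finite_subset by blast
  then have "card (N0 \<union> N1 \<union> N2) = card N0 + card N1 + card N2"
    using fN0 fN1 N1(2) N2(2) by (simp add: card_Un_disjoint)
  moreover have "card (N0 \<union> N1 \<union> N2) \<le> row_rank d p (Kedges X \<union> Kedges Y)"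
    using N01X N2(3) fX fY by (intro card_le_row_rank N2(1)) (auto simp: finite_Kedges)
  ultimately show ?thesis using N0(3) N1(4) N2(4) by simp
qed

section \<open>The generic rigidity matroid\<close>

lemma rd_submod: "finite X \<Longrightarrow> finite Y \<Longrightarrow> rd V d (X \<union> Y) + rd V d (X \<inter> Y) \<le> rd V d X + rd V d Y"
  unfolding rd_eq_row_rank by (rule row_rank_submod)

lemma rd_mono: "finite Y \<Longrightarrow> X \<subseteq> Y \<Longrightarrow> rd V d X \<le> rd V d Y"
  unfolding rd_eq_row_rank by (rule row_rank_mono)

lemma rd_le_card: "finite X \<Longrightarrow> rd V d X \<le> card X"
  unfolding rd_eq_row_rank by (rule row_rank_le_card)

lemma rd_insert_le: "finite X \<Longrightarrow> rd V d (insert e X) \<le> rd V d X + 1"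
  unfolding rd_eq_row_rank by (rule row_rank_insert_le)

lemma rd_basis:
  assumes "finite X"
  obtains I where "I \<subseteq> X" "rd V d I = card I" "card I = rd V d X"
proof -
  obtain I where I: "I \<subseteq> X" "rows_indep d (generic_placement V d) I" "card I = row_rank d (generic_placement V d) X"
    using row_rank_basis[OF assms] .
  have fI: "finite I" using I(1) assms by (rule finite_subset)
  have "rd V d I = card I" unfolding rd_eq_row_rank using row_rank_eq_card_iff[OF fI] I(2) by simp
  then show ?thesis using that I(1) I(3) unfolding rd_eq_row_rank by simp
qed

lemma rd_indep_subset:
  assumes "finite Y" "rd V d Y = card Y" "X \<subseteq> Y"
  shows "rd V d X = card X"
proof -
  have fX: "finite X" using assms(1,3) by (rule finite_subset[rotated])
  have "rows_indep d (generic_placement V d) Y" using assms(1,2) row_rank_eq_card_iff unfolding rd_eq_row_rank by blast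
  then have "rows_indep d (generic_placement V d) X" using rows_indep_subset assms(1,3) by blast
  then show ?thesis using row_rank_eq_card_iff[OF fX] unfolding rd_eq_row_rank by blast
qed

lemma rd_union_le: "finite X \<Longrightarrow> finite Z \<Longrightarrow> rd V d (X \<union> Z) \<le> rd V d X + card Z"
  using rd_submod[of X Z V d] rd_le_card[of Z V d] by simp

lemma rd_insert_eq_mono:
  assumes B: "finite B" and AB: "A \<subseteq> B" and e: "rd V d (insert e A) = rd V d A"
  shows "rd V d (insert e B) = rd V d B"
proof -
  have fA: "finite A" using B AB by (rule finite_subset[rotated])
  have "rd V d (insert e A \<union> B) + rd V d (insert e A \<inter> B) \<le> rd V d (insert e A) + rd V d B"
    using rd_submod[of "insert e A" B V d] fA B by simp
  moreover have "insert e A \<union> B = insert e B" using AB by auto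
  moreover have "rd V d A \<le> rd V d (insert e A \<inter> B)" using AB B by (intro rd_mono) auto
  moreover have "rd V d B \<le> rd V d (insert e B)" using B by (intro rd_mono) auto
  ultimately show ?thesis using e by simp
qed

lemma rcircuit_rd_less: "rcircuit V d C \<Longrightarrow> rd V d C < card C"
  unfolding rcircuit_def by simp

lemma finite_subset_Kedges: "finite V \<Longrightarrow> X \<subseteq> Kedges V \<Longrightarrow> finite X"
  using finite_Kedges finite_subset by blast

lemma dependent_contains_rcircuit:
  assumes V: "finite V" and X: "X \<subseteq> Kedges V" and dep: "rd V d X < card X"
  obtains C where "rcircuit V d C" "C \<subseteq> X"
proof -
  have fX: "finite X" using V X by (rule finite_subset_Kedges)
  obtain C where C: "C \<subseteq> X" "rd V d C < card C"
    and min: "\<And>Y. Y \<subseteq> X \<Longrightarrow> rd V d Y < card Y \<Longrightarrow> card C \<le> card Y"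
    using ex_has_least_nat[of "\<lambda>Y. Y \<subseteq> X \<and> rd V d Y < card Y" X card] dep by blast
  have "rd V d C' = card C'" if "C' \<subset> C" for C'
  proof -
    have fC: "finite C" using C(1) fX by (rule finite_subset)
    have "card C' < card C" using fC that by (rule psubset_card_mono)
    then have "\<not> rd V d C' < card C'" using min[of C'] that C(1) by auto
    moreover have "rd V d C' \<le> card C'"
      using finite_subset[OF psubset_imp_subset[OF that] fC] by (rule rd_le_card)
    ultimately show ?thesis by simp
  qed
  then have "rcircuit V d C" using C X unfolding rcircuit_def by auto
  then show thesis using that C by blast
qed

lemma rcircuit_through_non_coloop:
  assumes V: "finite V" and X: "X \<subseteq> Kedges V" and e: "e \<in> X"
    and eq: "rd V d (X - {e}) = rd V d X"
  obtains C where "rcircuit V d C" "C \<subseteq> X" "e \<in> C"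
proof -
  have fX: "finite X" using V X by (rule finite_subset_Kedges)
  obtain I where I: "I \<subseteq> X - {e}" "rd V d I = card I" "card I = rd V d (X - {e})"
    using rd_basis[of "X - {e}"] fX by blast
  have fI: "finite I" using I(1) fX finite_subset by blast
  have "rd V d (insert e I) \<le> rd V d X" using I(1) e fX by (intro rd_mono) auto
  moreover have "e \<notin> I" using I(1) by auto
  ultimately have "rd V d (insert e I) < card (insert e I)" using I eq fI by simp
  moreover have "insert e I \<subseteq> Kedges V" using I(1) e X by auto
  ultimately obtain C where C: "rcircuit V d C" "C \<subseteq> insert e I"
    using dependent_contains_rcircuit[OF V] by blast
  have "e \<in> C"
  proof (rule ccontr)
    assume "e \<notin> C"
    then have "C \<subseteq> I" using C(2) by auto
    then have "rd V d C = card C" by (rule rd_indep_subset[OF fI I(2)])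
    then show False using rcircuit_rd_less[OF C(1)] by simp
  qed
  moreover have "C \<subseteq> X" using C(2) I(1) e by auto
  ultimately show thesis using that C(1) by blast
qed

lemma rd_Diff_rcircuit_elem:
  assumes V: "finite V" and X: "X \<subseteq> Kedges V" and C: "rcircuit V d C" "C \<subseteq> X" and e: "e \<in> C"
  shows "rd V d (X - {e}) = rd V d X"
proof -
  have fX: "finite X" using V X by (rule finite_subset_Kedges)
  have fC: "finite C" using C(2) fX by (rule finite_subset)
  have "C - {e} \<subset> C" using e by auto
  then have i: "rd V d (C - {e}) = card (C - {e})" using C(1) unfolding rcircuit_def by blast
  have "rd V d C < card C" using C(1) by (rule rcircuit_rd_less)
  then have "rd V d C \<le> rd V d (C - {e})" using i e fC by (simp add: card_Diff_singleton)
  moreover have "rd V d (C - {e}) \<le> rd V d C" using fC by (intro rd_mono) auto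
  moreover have "insert e (C - {e}) = C" using e by auto
  ultimately have "rd V d (insert e (C - {e})) = rd V d (C - {e})" by simp
  then have "rd V d (insert e (X - {e})) = rd V d (X - {e})"
    by (rule rd_insert_eq_mono[rotated 2]) (use fX C(2) in auto)
  moreover have "insert e (X - {e}) = X" using e C(2) by auto
  ultimately show ?thesis by simp
qed

definition cyclic_part :: "'a set \<Rightarrow> nat \<Rightarrow> 'a set set \<Rightarrow> 'a set set" where
  "cyclic_part V d X = \<Union>{C. C \<subseteq> X \<and> rcircuit V d C}"

lemma cyclic_part_subset: "cyclic_part V d X \<subseteq> X"
  unfolding cyclic_part_def by auto

lemma rcyclic_cyclic_part:
  assumes "X \<subseteq> Kedges V"
  shows "rcyclic V d (cyclic_part V d X)"
proof -
  have "{C. C \<subseteq> cyclic_part V d X \<and> rcircuit V d C} = {C. C \<subseteq> X \<and> rcircuit V d C}"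
    unfolding cyclic_part_def by auto
  then show ?thesis unfolding rcyclic_def using assms cyclic_part_subset[of V d X] by (simp add: cyclic_part_def)
qed

lemma rd_Diff_rcyclic_elem:
  assumes V: "finite V" and D: "rcyclic V d D" and e: "e \<in> D"
  shows "rd V d (D - {e}) = rd V d D"
proof -
  have DK: "D \<subseteq> Kedges V" using D unfolding rcyclic_def by simp
  have "e \<in> \<Union>{C. C \<subseteq> D \<and> rcircuit V d C}" using D e unfolding rcyclic_def by blast
  then obtain C where "C \<subseteq> D" "rcircuit V d C" "e \<in> C" by blast
  then show ?thesis using rd_Diff_rcircuit_elem[OF V DK] by blast
qed

definition nullity :: "'a set \<Rightarrow> nat \<Rightarrow> 'a set set \<Rightarrow> int" where
  "nullity V d X = int (card X) - int (rd V d X)"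

lemma kfold_circuit_iff: "kfold_circuit V d k D \<longleftrightarrow> rcyclic V d D \<and> nullity V d D = k"
  unfolding kfold_circuit_def nullity_def by auto

lemma nullity_cyclic_part:
  assumes V: "finite V" and X: "X \<subseteq> Kedges V"
  shows "nullity V d (cyclic_part V d X) = nullity V d X"
proof -
  have fX: "finite X" using V X by (rule finite_subset_Kedges)
  let ?Y = "cyclic_part V d X"
  have fY: "finite ?Y" using cyclic_part_subset fX by (rule finite_subset)
  have coloop: "rd V d (X - {f}) \<noteq> rd V d X" if f: "f \<in> X - ?Y" for f
  proof
    assume "rd V d (X - {f}) = rd V d X"
    then obtain C where "rcircuit V d C" "C \<subseteq> X" "f \<in> C" using rcircuit_through_non_coloop[OF V X] f by blast
    then have "f \<in> ?Y" unfolding cyclic_part_def by blast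
    then show False using f by simp
  qed
  have step: "rd V d (insert f Z) = rd V d Z + 1" if f: "f \<in> X - ?Y" and Z: "Z \<subseteq> X - {f}" for f Z
  proof -
    have fZ: "finite Z" using Z fX by (meson finite_Diff finite_subset)
    have "rd V d (insert f Z) \<noteq> rd V d Z"
    proof
      assume h: "rd V d (insert f Z) = rd V d Z"
      have "rd V d (insert f (X - {f})) = rd V d (X - {f})"
        by (rule rd_insert_eq_mono[OF _ Z h]) (use fX in simp)
      moreover have "insert f (X - {f}) = X" using f by auto
      ultimately show False using coloop[OF f] by simp
    qed
    moreover have "rd V d Z \<le> rd V d (insert f Z)" using fZ by (intro rd_mono) auto
    moreover have "rd V d (insert f Z) \<le> rd V d Z + 1" by (rule rd_insert_le[OF fZ])
    ultimately show ?thesis by simp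
  qed
  have ind: "T \<subseteq> X - ?Y \<Longrightarrow> rd V d (?Y \<union> T) = rd V d ?Y + card T" if "finite T" for T
    using that
  proof (induction T rule: finite_induct)
    case empty
    then show ?case by simp
  next
    case (insert f T)
    have "?Y \<union> T \<subseteq> X - {f}" using insert cyclic_part_subset[of V d X] by auto
    then have "rd V d (insert f (?Y \<union> T)) = rd V d (?Y \<union> T) + 1" using step insert.prems by simp
    then show ?case using insert by simp
  qed
  have "rd V d (?Y \<union> (X - ?Y)) = rd V d ?Y + card (X - ?Y)" by (rule ind) (use fX in simp_all)
  moreover have "?Y \<union> (X - ?Y) = X" using cyclic_part_subset by auto
  moreover have "card X = card ?Y + card (X - ?Y)"
    using fX cyclic_part_subset[of V d X] by (metis card_Diff_subset fY add_diff_inverse_nat card_mono not_less)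
  ultimately show ?thesis unfolding nullity_def by simp
qed

lemma subset_rcl: "X \<subseteq> Kedges V \<Longrightarrow> X \<subseteq> rcl V d X"
  unfolding rcl_def by (auto simp: insert_absorb)

lemma rcl_subset_Kedges: "rcl V d X \<subseteq> Kedges V"
  unfolding rcl_def by auto

lemma rcl_mono:
  assumes V: "finite V" and Y: "Y \<subseteq> Kedges V" and XY: "X \<subseteq> Y"
  shows "rcl V d X \<subseteq> rcl V d Y"
proof
  fix x assume "x \<in> rcl V d X"
  then have x: "x \<in> Kedges V" "rd V d (insert x X) = rd V d X" unfolding rcl_def by auto
  have "rd V d (insert x Y) = rd V d Y"
    by (rule rd_insert_eq_mono[OF _ XY x(2)]) (use V Y finite_subset_Kedges in blast)
  then show "x \<in> rcl V d Y" using x unfolding rcl_def by simp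
qed

lemma rd_rcl:
  assumes V: "finite V" and X: "X \<subseteq> Kedges V"
  shows "rd V d (rcl V d X) = rd V d X"
proof -
  have fX: "finite X" using V X by (rule finite_subset_Kedges)
  have ind: "T \<subseteq> rcl V d X \<Longrightarrow> rd V d (X \<union> T) = rd V d X" if "finite T" for T
    using that
  proof (induction T rule: finite_induct)
    case empty
    then show ?case by simp
  next
    case (insert f T)
    then have f: "rd V d (insert f X) = rd V d X" unfolding rcl_def by auto
    have "rd V d (insert f (X \<union> T)) = rd V d (X \<union> T)"
      by (rule rd_insert_eq_mono[OF _ _ f]) (use fX insert in auto)
    then show ?case using insert by simp
  qed
  have fcl: "finite (rcl V d X)" using V rcl_subset_Kedges finite_subset_Kedges by blast
  have "rd V d (X \<union> rcl V d X) = rd V d X" using ind[OF fcl] by simp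
  moreover have "X \<union> rcl V d X = rcl V d X" using subset_rcl[OF X] by auto
  ultimately show ?thesis by simp
qed

lemma rd_Kedges:
  assumes "finite V" "X \<subseteq> V"
  shows "int (rd V d (Kedges X)) = complete_rank d (card X)"
  unfolding rd_eq_row_rank by (rule row_rank_Kedges[OF generic_generic_placement[OF assms(1)] assms])

lemma rd_Kedges_Int:
  assumes V: "finite V" and X: "X \<subseteq> V" and Y: "Y \<subseteq> V"
  shows "int (rd V d (Kedges (X \<inter> Y)))
    = int (rd V d (Kedges X)) + int (rd V d (Kedges Y)) - int (rd V d (Kedges X \<union> Kedges Y))"
proof -
  have "finite (Kedges X)" "finite (Kedges Y)" using X Y V by (meson finite_Kedges finite_subset)+
  then have "rd V d (Kedges X \<union> Kedges Y) + rd V d (Kedges (X \<inter> Y)) \<le> rd V d (Kedges X) + rd V d (Kedges Y)"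
    using rd_submod[of "Kedges X" "Kedges Y" V d] by (simp add: Kedges_Int)
  then have "int (rd V d (Kedges X \<union> Kedges Y)) + int (rd V d (Kedges (X \<inter> Y)))
      \<le> int (rd V d (Kedges X)) + int (rd V d (Kedges Y))"
    by (simp only: of_nat_add[symmetric] of_nat_le_iff)
  moreover have "complete_rank d (card X) + complete_rank d (card Y) - complete_rank d (card (X \<inter> Y))
      \<le> int (rd V d (Kedges X \<union> Kedges Y))"
    unfolding rd_eq_row_rank using complete_rank_modular[OF generic_generic_placement[OF V] V X Y] .
  moreover have "X \<inter> Y \<subseteq> V" using X by auto
  ultimately show ?thesis
    using rd_Kedges[OF V X, of d] rd_Kedges[OF V Y, of d] rd_Kedges[OF V, of "X \<inter> Y" d] by linarith
qed

lemma rcl_eq_Kedges: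
  assumes V: "finite V" and d: "d \<ge> 1" and W: "W \<subseteq> V" and F: "F \<subseteq> Kedges W"
    and r: "rd V d F = rd V d (Kedges W)"
  shows "rcl V d F = Kedges W"
proof
  have fKW: "finite (Kedges W)" using W V by (meson finite_Kedges finite_subset)
  have fF: "finite F" using F fKW by (rule finite_subset)
  show "Kedges W \<subseteq> rcl V d F"
  proof
    fix e assume e: "e \<in> Kedges W"
    have "rd V d F \<le> rd V d (F \<union> {e})" using fF by (intro rd_mono) auto
    moreover have "rd V d (F \<union> {e}) \<le> rd V d (Kedges W)" using e F fKW by (intro rd_mono) auto
    moreover have "e \<in> Kedges V" using e Kedges_mono[OF W] by auto
    ultimately show "e \<in> rcl V d F" unfolding rcl_def using r by simp
  qed
  show "rcl V d F \<subseteq> Kedges W"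
  proof
    fix e assume e: "e \<in> rcl V d F"
    then have eV: "e \<in> Kedges V" and eq: "rd V d (F \<union> {e}) = rd V d F" unfolding rcl_def by auto
    show "e \<in> Kedges W"
    proof (rule ccontr)
      assume nW: "e \<notin> Kedges W"
      obtain a b where ab: "e = {a, b}" "a \<noteq> b" using eV unfolding Kedges_def by (auto simp: card_2_iff)
      have abV: "a \<in> V" "b \<in> V" using eV ab unfolding Kedges_def by auto
      have nab: "\<not> (a \<in> W \<and> b \<in> W)" using nW ab eV unfolding Kedges_def by auto
      obtain z u where zu: "e = {z, u}" "z \<noteq> u" "z \<notin> W" "z \<in> V" "u \<in> V"
      proof (cases "a \<in> W")
        case True
        then have "b \<notin> W" using nab by simp
        moreover have "e = {b, a}" using ab by (simp add: insert_commute)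
        ultimately show ?thesis using that[of b a] ab abV by simp
      next
        case False
        then show ?thesis using that[of a b] ab abV by simp
      qed
      obtain I where I: "I \<subseteq> F" "rd V d I = card I" "card I = rd V d F" using rd_basis[OF fF] .
      have fI: "finite I" using I(1) fF by (rule finite_subset)
      have "rows_indep d (generic_placement V d) I"
        using I(2) row_rank_eq_card_iff[OF fI] unfolding rd_eq_row_rank by simp
      moreover have "\<forall>e\<in>I. z \<notin> e" using I(1) F zu(3) unfolding Kedges_def by auto
      ultimately have "rows_indep d (generic_placement V d) (I \<union> (\<lambda>x. {z, x}) ` {u})"
        using zu d by (intro rows_indep_add_vertex[OF generic_generic_placement[OF V] V]) (auto simp: V fI)
      then have "card (I \<union> {e}) \<le> rd V d (F \<union> {e})"
        unfolding rd_eq_row_rank using I(1) fF zu(1) by (intro card_le_row_rank) auto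
      moreover have "e \<notin> I" using I(1) F zu(1,3) unfolding Kedges_def by auto
      ultimately show False using eq I(3) fI by simp
    qed
  qed
qed

lemma nullity_mono:
  assumes V: "finite V" and Y: "Y \<subseteq> Kedges V" and XY: "X \<subseteq> Y"
  shows "nullity V d X \<le> nullity V d Y"
proof -
  have fY: "finite Y" using V Y by (rule finite_subset_Kedges)
  have fX: "finite X" using fY XY by (rule finite_subset[rotated])
  have "rd V d (X \<union> (Y - X)) \<le> rd V d X + card (Y - X)" using fX fY by (intro rd_union_le) auto
  moreover have "X \<union> (Y - X) = Y" using XY by auto
  moreover have "card Y = card X + card (Y - X)" using fY XY
    by (metis card_Diff_subset card_mono fX le_add_diff_inverse)
  ultimately show ?thesis unfolding nullity_def by simp
qed

lemma nullity_psubset_rcyclic: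
  assumes V: "finite V" and D: "rcyclic V d D" and X: "X \<subset> D"
  shows "nullity V d X < nullity V d D"
proof -
  have DK: "D \<subseteq> Kedges V" using D unfolding rcyclic_def by simp
  have fD: "finite D" using V DK by (rule finite_subset_Kedges)
  obtain e where e: "e \<in> D" "e \<notin> X" using X by blast
  have "nullity V d X \<le> nullity V d (D - {e})"
    using nullity_mono[OF V, of "D - {e}" X d] DK X e by auto
  moreover have "rd V d (D - {e}) = rd V d D" by (rule rd_Diff_rcyclic_elem[OF V D e(1)])
  moreover have "card (D - {e}) = card D - 1" using e fD by simp
  moreover have "card D \<ge> 1" using e fD by (metis One_nat_def Suc_leI card_gt_0_iff empty_iff)
  ultimately show ?thesis unfolding nullity_def by simp
qed

text \<open>Submodularity of the rank makes nullity supermodular, so two distinct (k-1)-fold circuits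
  in a k-fold circuit have a union of nullity at least k.\<close>
lemma kfold_subcircuits_union:
  assumes V: "finite V" and E: "kfold_circuit V d k E"
    and D1: "D1 \<subseteq> E" "kfold_circuit V d (k - 1) D1"
    and D2: "D2 \<subseteq> E" "kfold_circuit V d (k - 1) D2" and ne: "D1 \<noteq> D2"
  shows "D1 \<union> D2 = E"
proof (rule ccontr)
  assume nE: "D1 \<union> D2 \<noteq> E"
  have EK: "E \<subseteq> Kedges V" using E unfolding kfold_circuit_def rcyclic_def by simp
  have f1: "finite D1" "finite D2" using V EK D1(1) D2(1) finite_subset finite_subset_Kedges by blast+
  have "rd V d (D1 \<union> D2) + rd V d (D1 \<inter> D2) \<le> rd V d D1 + rd V d D2" by (rule rd_submod[OF f1])
  moreover have "card (D1 \<union> D2) + card (D1 \<inter> D2) = card D1 + card D2"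
    using f1 by (rule card_Un_Int[symmetric])
  ultimately have "nullity V d D1 + nullity V d D2 \<le> nullity V d (D1 \<union> D2) + nullity V d (D1 \<inter> D2)"
    unfolding nullity_def by linarith
  moreover have "nullity V d (D1 \<inter> D2) < k - 1"
  proof -
    have "D1 \<inter> D2 \<subset> D1 \<or> D1 \<inter> D2 \<subset> D2" using ne by blast
    then show ?thesis
      using nullity_psubset_rcyclic[OF V, of d D1] nullity_psubset_rcyclic[OF V, of d D2] D1(2) D2(2)
      unfolding kfold_circuit_iff by auto
  qed
  moreover have "nullity V d (D1 \<union> D2) < k"
  proof -
    have "D1 \<union> D2 \<subset> E" using nE D1(1) D2(1) by auto
    then show ?thesis using nullity_psubset_rcyclic[OF V, of d E] E unfolding kfold_circuit_iff by auto
  qed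
  ultimately show False using D1(2) D2(2) unfolding kfold_circuit_iff by linarith
qed

lemma principal_partition_exists:
  assumes V: "finite V" and E: "kfold_circuit V d k E"
  shows "principal_partition V d k E ((\<lambda>D'. E - D') ` {D'. D' \<subseteq> E \<and> kfold_circuit V d (k - 1) D'})"
proof -
  let ?D = "{D'. D' \<subseteq> E \<and> kfold_circuit V d (k - 1) D'}"
  let ?P = "(\<lambda>D'. E - D') ` ?D"
  have Ec: "rcyclic V d E" and Er: "nullity V d E = k" using E unfolding kfold_circuit_iff by auto
  have EK: "E \<subseteq> Kedges V" using Ec unfolding rcyclic_def by simp
  have nonempty: "A \<noteq> {}" if "A \<in> ?P" for A
  proof -
    obtain D' where D': "D' \<subseteq> E" "nullity V d D' = k - 1" "A = E - D'"
      using \<open>A \<in> ?P\<close> unfolding kfold_circuit_iff by blast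
    then have "D' \<noteq> E" using Er by auto
    then show ?thesis using D' by auto
  qed
  have "E \<subseteq> \<Union>?P"
  proof
    fix e assume e: "e \<in> E"
    define D' where "D' = cyclic_part V d (E - {e})"
    have sub: "E - {e} \<subseteq> Kedges V" using EK by auto
    have "nullity V d D' = k - 1"
    proof -
      have "card E \<ge> 1" using e finite_subset_Kedges[OF V EK] by (metis One_nat_def Suc_leI card_gt_0_iff empty_iff)
      then have "nullity V d (E - {e}) = k - 1"
        using rd_Diff_rcyclic_elem[OF V Ec e] Er e finite_subset_Kedges[OF V EK]
        unfolding nullity_def by simp
      then show ?thesis unfolding D'_def using nullity_cyclic_part[OF V sub] by simp
    qed
    moreover have "rcyclic V d D'" unfolding D'_def by (rule rcyclic_cyclic_part[OF sub])
    ultimately have "kfold_circuit V d (k - 1) D'" unfolding kfold_circuit_iff by simp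
    moreover have "D' \<subseteq> E - {e}" unfolding D'_def by (rule cyclic_part_subset)
    ultimately show "e \<in> \<Union>?P" using e by blast
  qed
  then have union: "\<Union>?P = E" by auto
  have disjoint: "A \<inter> B = {}" if "A \<in> ?P" "B \<in> ?P" "A \<noteq> B" for A B
  proof -
    obtain D1 D2 where "D1 \<in> ?D" "D2 \<in> ?D" "A = E - D1" "B = E - D2"
      using \<open>A \<in> ?P\<close> \<open>B \<in> ?P\<close> by blast
    moreover from this have "D1 \<union> D2 = E"
      using \<open>A \<noteq> B\<close> kfold_subcircuits_union[OF V E] by blast
    ultimately show ?thesis by blast
  qed
  have complements: "(\<lambda>A. E - A) ` ?P = ?D"
  proof -
    have "(\<lambda>A. E - A) ` ?P = (\<lambda>D'. E - (E - D')) ` ?D" by (simp add: image_image)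
    also have "\<dots> = id ` ?D" by (rule image_cong[OF refl]) auto
    finally show ?thesis by simp
  qed
  show ?thesis
    unfolding principal_partition_def using nonempty union disjoint complements by simp
qed

section \<open>Balanced multiple circuits\<close>

lemma rd_Kedges_eq_card:
  assumes "finite V" "W \<subseteq> V" "card W \<le> d + 1"
  shows "rd V d (Kedges W) = card (Kedges W)"
proof -
  have "finite W" using assms(1,2) by (rule finite_subset[rotated])
  then show ?thesis
    using rd_Kedges[OF assms(1,2), of d] complete_rank_small[OF assms(3)] card_Kedges[of W] by simp
qed

lemma span_verts_subset: "D \<subseteq> Kedges V \<Longrightarrow> span_verts D \<subseteq> V"
  unfolding span_verts_def Kedges_def by auto

lemma subset_Kedges_span_verts: "D \<subseteq> Kedges V \<Longrightarrow> D \<subseteq> Kedges (span_verts D)"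
  unfolding span_verts_def Kedges_def by auto

text \<open>A nonempty cyclic graph has more than d + 1 vertices, since complete graphs on at most
  d + 1 vertices are independent; so rigidity gives it the rank of the complete graph on its
  vertices.\<close>
lemma rcl_rrigid_rcyclic:
  assumes V: "finite V" and d: "d \<ge> 1" and D: "rcyclic V d D" and rig: "rrigid V d D"
  shows "rcl V d D = Kedges (span_verts D)"
proof -
  define W where "W = span_verts D"
  have DK: "D \<subseteq> Kedges V" using D unfolding rcyclic_def by simp
  have WV: "W \<subseteq> V" and DW: "D \<subseteq> Kedges W"
    unfolding W_def using span_verts_subset[OF DK] subset_Kedges_span_verts[OF DK] .
  have fW: "finite W" using V WV by (rule finite_subset[rotated])
  have "rd V d D = rd V d (Kedges W)"
  proof (cases "D = {}")
    case True
    then have "Kedges W = {}" unfolding W_def span_verts_def Kedges_def by auto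
    then show ?thesis using True by simp
  next
    case False
    then obtain C where C: "C \<subseteq> D" "rcircuit V d C" using D unfolding rcyclic_def by blast
    have big: "\<not> card W \<le> d + 1"
    proof
      assume "card W \<le> d + 1"
      then have "rd V d (Kedges W) = card (Kedges W)" by (rule rd_Kedges_eq_card[OF V WV])
      then have "rd V d C = card C" using rd_indep_subset[OF finite_Kedges[OF fW]] C(1) DW by blast
      then show False using rcircuit_rd_less[OF C(2)] by simp
    qed
    then have "int (rd V d D) = int d * int (card W) - int ((d + 1) choose 2)"
      using rig unfolding rrigid_def W_def by auto
    then show ?thesis using rd_Kedges[OF V WV, of d] big unfolding complete_rank_def by simp
  qed
  then show ?thesis unfolding W_def[symmetric] by (rule rcl_eq_Kedges[OF V d WV DW])
qed

lemma Kedges_INT: "Q \<noteq> {} \<Longrightarrow> (\<Inter>A\<in>Q. Kedges (W A)) = Kedges (\<Inter>A\<in>Q. W A)"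
  unfolding Kedges_def by auto

text \<open>Adding the parts A one at a time, the rank drops by card A - 1 each time, because the two
  complete graphs being intersected form a modular pair whose union spans E.\<close>
lemma rd_INT_rcl_complements:
  assumes V: "finite V" and EK: "E \<subseteq> Kedges V" and fP: "finite P"
    and disj: "\<And>A B. A \<in> P \<Longrightarrow> B \<in> P \<Longrightarrow> A \<noteq> B \<Longrightarrow> A \<inter> B = {}"
    and cl: "\<And>A. A \<in> P \<Longrightarrow> rcl V d (E - A) = Kedges (W A)"
    and WV: "\<And>A. A \<in> P \<Longrightarrow> W A \<subseteq> V"
    and rk: "\<And>A. A \<in> P \<Longrightarrow> int (rd V d (E - A)) = int (rd V d E) - int (card A) + 1"
    and Q: "Q \<subseteq> P" "Q \<noteq> {}"
  shows "int (rd V d (\<Inter>A\<in>Q. rcl V d (E - A))) = int (rd V d E) - (\<Sum>A\<in>Q. int (card A) - 1)"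
proof -
  have fQ: "finite Q" using fP Q(1) by (rule finite_subset[rotated])
  have clE: "finite (rcl V d E)" "rd V d (rcl V d E) = rd V d E"
    using finite_subset_Kedges[OF V rcl_subset_Kedges] rd_rcl[OF V EK] by blast+
  have cl_sub: "rcl V d (E - A) \<subseteq> rcl V d E" for A by (rule rcl_mono[OF V EK]) auto
  show ?thesis using fQ Q(2) Q(1)
  proof (induction Q rule: finite_ne_induct)
    case (singleton A)
    have "E - A \<subseteq> Kedges V" using EK by auto
    then show ?case using rk singleton rd_rcl[OF V, of "E - A" d] by auto
  next
    case (insert A Q)
    define U where "U = (\<Inter>B\<in>Q. W B)"
    have AP: "A \<in> P" and QP: "Q \<subseteq> P" using insert.prems by auto
    have UV: "U \<subseteq> V" unfolding U_def using insert.hyps(2) QP WV by blast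
    have "(\<Inter>B\<in>Q. rcl V d (E - B)) = (\<Inter>B\<in>Q. Kedges (W B))"
      using QP cl by (intro INF_cong) auto
    then have G: "(\<Inter>B\<in>Q. rcl V d (E - B)) = Kedges U"
      unfolding U_def using Kedges_INT[OF insert.hyps(2)] by simp
    have GA: "(\<Inter>B\<in>insert A Q. rcl V d (E - B)) = Kedges (W A \<inter> U)"
      using G cl[OF AP] Kedges_Int[of "W A" U] by simp
    have lo: "E \<subseteq> Kedges U \<union> Kedges (W A)"
    proof
      fix x assume x: "x \<in> E"
      show "x \<in> Kedges U \<union> Kedges (W A)"
      proof (cases "x \<in> A")
        case True
        have "x \<in> rcl V d (E - B)" if B: "B \<in> Q" for B
        proof -
          have "B \<in> P" "B \<noteq> A" using B QP insert.hyps(3) by auto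
          then have "x \<notin> B" using disj[OF AP] True by blast
          then show ?thesis using x subset_rcl[of "E - B" V d] EK by auto
        qed
        then show ?thesis using G by auto
      next
        case False
        then show ?thesis using x subset_rcl[of "E - A" V d] EK cl[OF AP] by auto
      qed
    qed
    obtain B0 where "B0 \<in> Q" using insert.hyps(2) by blast
    then have "Kedges U \<subseteq> rcl V d E" unfolding G[symmetric] using cl_sub by blast
    then have up: "Kedges U \<union> Kedges (W A) \<subseteq> rcl V d E" using cl[OF AP] cl_sub by auto
    then have "finite (Kedges U \<union> Kedges (W A))" using clE(1) by (rule finite_subset)
    then have "rd V d E \<le> rd V d (Kedges U \<union> Kedges (W A))" using lo by (rule rd_mono)
    moreover have "rd V d (Kedges U \<union> Kedges (W A)) \<le> rd V d E"
      using rd_mono[OF clE(1) up, where V = V and d = d] clE(2) by simp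
    ultimately have "rd V d (Kedges U \<union> Kedges (W A)) = rd V d E" by simp
    moreover have "Kedges (W A) \<union> Kedges U = Kedges U \<union> Kedges (W A)" by auto
    ultimately have "int (rd V d (Kedges (W A \<inter> U)))
        = int (rd V d (Kedges U)) + int (rd V d (Kedges (W A))) - int (rd V d E)"
      using rd_Kedges_Int[OF V WV[OF AP] UV] by simp
    moreover have "int (rd V d (Kedges U)) = int (rd V d E) - (\<Sum>B\<in>Q. int (card B) - 1)"
      using insert.IH QP G by simp
    moreover have "int (rd V d (Kedges (W A))) = int (rd V d E) - int (card A) + 1"
    proof -
      have "E - A \<subseteq> Kedges V" using EK by auto
      then show ?thesis using rk[OF AP] rd_rcl[OF V, of "E - A" d] cl[OF AP] by simp
    qed
    ultimately show ?case using GA insert.hyps(1,3) by simp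
  qed
qed

lemma principal_partition_complement:
  "principal_partition V d k E P \<Longrightarrow> A \<in> P \<Longrightarrow> E - A \<subseteq> E \<and> kfold_circuit V d (k - 1) (E - A)"
  unfolding principal_partition_def by blast

lemma balanced_if_complements_rrigid:
  assumes V: "finite V" and d: "d \<ge> 1" and k: "k \<ge> 1"
    and E: "kfold_circuit V d k E" and P: "principal_partition V d k E P"
    and rig: "\<And>A. A \<in> P \<Longrightarrow> rrigid V d (E - A)"
  shows "balanced V d k E"
proof -
  have EK: "E \<subseteq> Kedges V" and Er: "nullity V d E = k"
    using E unfolding kfold_circuit_iff rcyclic_def by auto
  have fE: "finite E" using V EK by (rule finite_subset_Kedges)
  have un: "\<Union>P = E" and disj: "\<And>A B. A \<in> P \<Longrightarrow> B \<in> P \<Longrightarrow> A \<noteq> B \<Longrightarrow> A \<inter> B = {}"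
    using P unfolding principal_partition_def by auto
  have fP: "finite P" using fE un by (simp add: finite_UnionD)
  have sub: "A \<subseteq> E" if "A \<in> P" for A using that un by blast
  have fin: "finite A" if "A \<in> P" for A using sub[OF that] fE by (rule finite_subset)
  have "E \<noteq> {}" using Er k unfolding nullity_def by auto
  then have "P \<noteq> {}" using un by auto
  have cyc: "rcyclic V d (E - A)" and null: "nullity V d (E - A) = k - 1" if "A \<in> P" for A
    using principal_partition_complement[OF P that] unfolding kfold_circuit_iff by auto
  have "int (rd V d (\<Inter>A\<in>P. rcl V d (E - A))) = int (rd V d E) - (\<Sum>A\<in>P. int (card A) - 1)"
  proof (rule rd_INT_rcl_complements[OF V EK fP disj _ _ _ subset_refl \<open>P \<noteq> {}\<close>])
    show "rcl V d (E - A) = Kedges (span_verts (E - A))" if "A \<in> P" for A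
      using rcl_rrigid_rcyclic[OF V d cyc rig] that by blast
    show "span_verts (E - A) \<subseteq> V" for A using EK by (intro span_verts_subset) auto
    show "int (rd V d (E - A)) = int (rd V d E) - int (card A) + 1" if "A \<in> P" for A
      using null[OF that] Er card_Diff_subset[OF fin[OF that] sub[OF that]] card_mono[OF fE sub[OF that]]
      unfolding nullity_def by simp
  qed
  also have "(\<Sum>A\<in>P. int (card A) - 1) = int (card E) - int (card P)"
    using card_Union_disjoint[of P] disj fin un by (simp add: sum_subtractf pairwise_def disjnt_def)
  finally show ?thesis
    unfolding balanced_def using P Er unfolding nullity_def by auto
qed

theorem theorem3p16:
  fixes V :: "'a set" and E :: "'a set set" and d k :: nat
  assumes "finite V" and "E \<subseteq> Kedges V"
    and "d \<ge> 1" and "k \<ge> 1"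
    and "kfold_circuit V d (int k) E"
    and "\<forall>D'. D' \<subseteq> E \<and> kfold_circuit V d (int k - 1) D' \<longrightarrow> rrigid V d D'"
  shows "balanced V d (int k) E"
proof (rule balanced_if_complements_rrigid)
  let ?P = "(\<lambda>D'. E - D') ` {D'. D' \<subseteq> E \<and> kfold_circuit V d (int k - 1) D'}"
  show "principal_partition V d (int k) E ?P"
    using principal_partition_exists[OF assms(1,5)] .
  show "rrigid V d (E - A)" if "A \<in> ?P" for A
    using assms(6) principal_partition_complement[OF \<open>principal_partition V d (int k) E ?P\<close> that]
    by blast
qed (use assms in auto)

end
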